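(* Let $d\geq3$ and let $x_1,\dots,x_{d-1}$ be real numbers with $0<x_i<1$ for all $i$ and $x_i\neq x_j$ for at least one pair $(i,j)$. Let $\Omega$ be the quantum channel on $d\times d$ matrices with Kraus operators $A_0=\mathrm{diag}(1,x_1,\dots,x_{d-1})$ and, for $m=1,\dots,d-1$, $(A_m)_{ij}=\sqrt{1-x_m^2}\,\delta_{0i}\delta_{mj}$ ($i,j=0,\dots,d-1$). Then there is a pure state $|\psi'\rangle\in\mathbb{C}^d\otimes\mathbb{C}^d$ which is not maximally entangled such that for every maximally entangled state $|\Phi\rangle\in\mathbb{C}^d\otimes\mathbb{C}^d$, $$\mathbb{F}(\Omega)\geq\mathbb{F}(\rho_{\psi',\Omega})>\mathbb{F}^*(\rho_{\Phi,\Omega}).$$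
   Context: For a pure state $|\psi\rangle\in\mathbb{C}^d\otimes\mathbb{C}^d$, $\rho_{\psi,\Omega}=(\mathcal{I}\otimes\Omega)(|\psi\rangle\langle\psi|)$ with $\Omega(X)=\sum_m A_mXA_m^\dagger$. The singlet fraction of a two-qudit state $\rho$ is $\mathbb{F}(\rho)=\max_{|\Phi\rangle}\langle\Phi|\rho|\Phi\rangle$ over all maximally entangled $|\Phi\rangle\in\mathbb{C}^d\otimes\mathbb{C}^d$. The maximum achievable singlet fraction is $\mathbb{F}^*(\rho)=\max_L\mathbb{F}(L(\rho))$ over all trace-preserving LOCC operations $L$. The one-shot optimal singlet fraction of the channel is $\mathbb{F}(\Omega)=\max_{|\psi\rangle}\mathbb{F}^*(\rho_{\psi,\Omega})$ over all pure states $|\psi\rangle\in\mathbb{C}^d\otimes\mathbb{C}^d$. *)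

theory Defs
  imports "Jordan_Normal_Form.Matrix"
begin

text \<open>Conventions. A vector of the bipartite space C^a (x) C^b is a complex vector of
dimension a*b, the basis vector e_i (x) e_j having index i*b + j.\<close>

definition adj :: "complex mat \<Rightarrow> complex mat" where
  "adj A = mat (dim_col A) (dim_row A) (\<lambda>(i,j). cnj (A $$ (j,i)))"

definition kron :: "complex mat \<Rightarrow> complex mat \<Rightarrow> complex mat" where
  "kron A B = mat (dim_row A * dim_row B) (dim_col A * dim_col B)
     (\<lambda>(i,j). A $$ (i div dim_row B, j div dim_col B) * B $$ (i mod dim_row B, j mod dim_col B))"

definition ket_bra :: "complex vec \<Rightarrow> complex mat" where
  "ket_bra v = mat (dim_vec v) (dim_vec v) (\<lambda>(i,j). v $ i * cnj (v $ j))"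

definition is_unit_vec :: "nat \<Rightarrow> complex vec \<Rightarrow> bool" where
  "is_unit_vec n v \<longleftrightarrow> dim_vec v = n \<and> (\<Sum>i<n. cmod (v $ i) ^ 2) = 1"

definition ptrace_B :: "nat \<Rightarrow> nat \<Rightarrow> complex mat \<Rightarrow> complex mat" where
  "ptrace_B a b R = mat a a (\<lambda>(i,k). \<Sum>j<b. R $$ (i*b + j, k*b + j))"

definition max_ent :: "nat \<Rightarrow> complex vec \<Rightarrow> bool" where
  "max_ent d \<Phi> \<longleftrightarrow> is_unit_vec (d*d) \<Phi> \<and>
     ptrace_B d d (ket_bra \<Phi>) = (1 / of_nat d) \<cdot>\<^sub>m (1\<^sub>m d)"

definition apply_kraus :: "nat \<Rightarrow> complex mat list \<Rightarrow> complex mat \<Rightarrow> complex mat" where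
  "apply_kraus n Ks R = foldr (\<lambda>K S. K * R * adj K + S) Ks (0\<^sub>m n n)"

definition expect :: "complex vec \<Rightarrow> complex mat \<Rightarrow> real" where
  "expect \<Phi> R = Re (\<Sum>i<dim_vec \<Phi>. cnj (\<Phi> $ i) * (R *\<^sub>v \<Phi>) $ i)"

definition singlet_fraction :: "nat \<Rightarrow> complex mat \<Rightarrow> real" where
  "singlet_fraction d R = Sup {expect \<Phi> R | \<Phi>. max_ent d \<Phi>}"

text \<open>An instrument is a list of branches (outcomes),
each branch being a CP map given by a list of Kraus operators acting on the joint space.
LOCC_instr a b a' b' E : E maps C^a (x) C^b to C^a' (x) C^b'.
Rules: a local instrument of Alice (resp. Bob), with total Kraus family trace preserving,
and conditional composition (the next instrument may depend on the earlier outcome).\<close>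
inductive LOCC_instr :: "nat \<Rightarrow> nat \<Rightarrow> nat \<Rightarrow> nat \<Rightarrow> complex mat list list \<Rightarrow> bool" where
  alice: "\<lbrakk> \<forall>Ks\<in>set KKs. \<forall>K\<in>set Ks. K \<in> carrier_mat a' a;
           foldr (\<lambda>K S. adj K * K + S) (concat KKs) (0\<^sub>m a a) = 1\<^sub>m a \<rbrakk>
     \<Longrightarrow> LOCC_instr a b a' b (map (map (\<lambda>K. kron K (1\<^sub>m b))) KKs)"
| bob: "\<lbrakk> \<forall>Ks\<in>set KKs. \<forall>K\<in>set Ks. K \<in> carrier_mat b' b;
           foldr (\<lambda>K S. adj K * K + S) (concat KKs) (0\<^sub>m b b) = 1\<^sub>m b \<rbrakk>
     \<Longrightarrow> LOCC_instr a b a b' (map (map (\<lambda>K. kron (1\<^sub>m a) K)) KKs)"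
| comp: "\<lbrakk> LOCC_instr a b a' b' E;
           \<forall>k<length E. LOCC_instr a' b' a'' b'' (F k) \<rbrakk>
     \<Longrightarrow> LOCC_instr a b a'' b''
           (concat (map (\<lambda>k. map (\<lambda>Gs. concat (map (\<lambda>G. map (\<lambda>K. G * K) (E ! k)) Gs)) (F k))
                        [0..<length E]))"

text \<open>Trace-preserving LOCC channels on C^d (x) C^d (sum over all outcomes).\<close>
definition LOCC_channel :: "nat \<Rightarrow> complex mat list \<Rightarrow> bool" where
  "LOCC_channel d Ks \<longleftrightarrow> (\<exists>E. LOCC_instr d d d d E \<and> Ks = concat E)"

definition max_singlet_fraction :: "nat \<Rightarrow> complex mat \<Rightarrow> real" where
  "max_singlet_fraction d R = Sup {singlet_fraction d (apply_kraus (d*d) Ks R) | Ks. LOCC_channel d Ks}"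

text \<open>rho_{psi,Omega} = (I (x) Omega)(|psi><psi|) for a channel Omega with Kraus operators As.\<close>
definition rho_out :: "nat \<Rightarrow> complex mat list \<Rightarrow> complex vec \<Rightarrow> complex mat" where
  "rho_out d As \<psi> = apply_kraus (d*d) (map (\<lambda>A. kron (1\<^sub>m d) A) As) (ket_bra \<psi>)"

definition channel_singlet_fraction :: "nat \<Rightarrow> complex mat list \<Rightarrow> real" where
  "channel_singlet_fraction d As = Sup {max_singlet_fraction d (rho_out d As \<psi>) | \<psi>. is_unit_vec (d*d) \<psi>}"

definition kraus_A :: "nat \<Rightarrow> (nat \<Rightarrow> real) \<Rightarrow> nat \<Rightarrow> complex mat" where
  "kraus_A d x m = (if m = 0 then
       mat d d (\<lambda>(i,j). if i = j then (if i = 0 then 1 else complex_of_real (x i)) else 0)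
     else mat d d (\<lambda>(i,j). if i = 0 \<and> j = m then complex_of_real (sqrt (1 - (x m)^2)) else 0))"

definition Omega_kraus :: "nat \<Rightarrow> (nat \<Rightarrow> real) \<Rightarrow> complex mat list" where
  "Omega_kraus d x = map (kraus_A d x) [0..<d]"

end

theory Submission
  imports Defs "Jordan_Normal_Form.Determinant"
begin

text \<open>
  With w = (1, x 1, ..., x (d-1)), the input psi' = (sum_j w_j |jj>) / |w| is not maximally
  entangled, and the Kraus operator A_0 = diag w of the channel maps it to a vector whose overlap
  with the standard maximally entangled state is already (1 + sum_m x_m^2) / d.

  For a maximally entangled input Phi, a trace-preserving LOCC operation is a family of product
  Kraus operators A_k (x) B_k with sum_k A_k^* A_k (x) B_k^* B_k = 1. Moving A_k across Phi and
  across the target state Phi' expresses the fidelity through the matrices G_k = B_k^T A'_k of a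
  family with the same completeness property. Cauchy-Schwarz, together with the fact that
  transposition is an isometry, bounds it by
  (1 + sum_m x_m^2) / d - sum_m x_m^2 (1 - x_m)^2 / (4 d^2).
\<close>

section \<open>Kronecker products and complete Kraus families\<close>

lemma sum_lessThan_mult:
  "(\<Sum>r<(a::nat)*b. f r) = (\<Sum>i<a. \<Sum>j<b. f (i*b+j))"
proof -
  have "(\<Sum>j<b. f (i*b+j)) = sum f {i*b..<i*b+b}" for i
    using sum.shift_bounds_nat_ivl[of f 0 "i*b" b] by (simp add: lessThan_atLeast0 add.commute)
  then show ?thesis
    using sum.nat_group[of f b a] by simp
qed

lemma sum_lessThan_split_first: "0 < (d::nat) \<Longrightarrow> (\<Sum>j<d. f j) = f 0 + (\<Sum>j\<in>{1..<d}. f j)"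
  by (simp add: lessThan_atLeast0 sum.atLeast_Suc_lessThan)

lemma pair_index_less: "i < (a::nat) \<Longrightarrow> j < b \<Longrightarrow> i*b+j < a*b"
proof -
  assume "i < a" "j < b"
  then have "i*b + j < (i+1)*b" by simp
  also have "\<dots> \<le> a*b" using \<open>i < a\<close> by (intro mult_right_mono) auto
  finally show ?thesis .
qed

lemma pair_index_eq_iff: "j < (b::nat) \<Longrightarrow> j' < b \<Longrightarrow> i*b+j = i'*b+j' \<longleftrightarrow> i = i' \<and> j = j'"
proof
  assume lt: "j < b" "j' < b" and eq: "i*b+j = i'*b+j'"
  have "(i*b+j) mod b = j" "(i'*b+j') mod b = j'" "(i*b+j) div b = i" "(i'*b+j') div b = i'"
    using lt by auto
  then show "i = i' \<and> j = j'" using eq by metis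
qed auto

lemma pair_index_cases:
  assumes "r < (a::nat) * b"
  obtains i j where "r = i*b+j" "i < a" "j < b"
proof
  have "0 < b" using assms by (cases b) auto
  then show "r mod b < b" by simp
  show "r div b < a" using assms by (simp add: less_mult_imp_div_less mult.commute)
qed simp

lemma sum_list_map_cong: "(\<And>x. x \<in> set xs \<Longrightarrow> f x = g x) \<Longrightarrow> sum_list (map f xs) = sum_list (map g xs)"
  by (metis map_eq_conv)

lemma sum_list_map_concat: "sum_list (map f (concat xss)) = sum_list (map (\<lambda>xs. sum_list (map f xs)) xss)"
  by (induction xss) auto

lemma sum_list_map_sum_swap:
  "sum_list (map (\<lambda>x. \<Sum>t\<in>A. f x t) xs) = (\<Sum>t\<in>A. sum_list (map (\<lambda>x. f x t) xs))"
  by (induction xs) (auto simp: sum.distrib)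

lemma sum_list_map_swap:
  fixes f :: "'a \<Rightarrow> 'b \<Rightarrow> 'c::comm_monoid_add"
  shows "sum_list (map (\<lambda>x. sum_list (map (f x) ys)) xs) = sum_list (map (\<lambda>y. sum_list (map (\<lambda>x. f x y) xs)) ys)"
proof (induction xs)
  case (Cons a xs)
  have "sum_list (map (\<lambda>y. f a y + sum_list (map (\<lambda>x. f x y) xs)) ys)
      = sum_list (map (f a) ys) + sum_list (map (\<lambda>y. sum_list (map (\<lambda>x. f x y) xs)) ys)"
    by (rule sum_list_addf)
  then show ?case using Cons by simp
qed simp

lemma sum_list_map_upt_nth: "sum_list (map (\<lambda>k. f (xs ! k)) [0..<length xs]) = sum_list (map f xs)"
proof -
  have "map (\<lambda>k. f (xs ! k)) [0..<length xs] = map f (map ((!) xs) [0..<length xs])" by simp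
  then show ?thesis by (simp only: map_nth)
qed

lemma index_mult_mat_sum:
  "i < dim_row A \<Longrightarrow> j < dim_col B \<Longrightarrow> dim_col A = dim_row B \<Longrightarrow>
   (A * B) $$ (i,j) = (\<Sum>k<dim_col A. A $$ (i,k) * B $$ (k,j))"
  by (simp add: scalar_prod_def lessThan_atLeast0)

lemma index_mult_mat_vec_sum:
  "i < dim_row A \<Longrightarrow> dim_col A = dim_vec v \<Longrightarrow> (A *\<^sub>v v) $ i = (\<Sum>k<dim_col A. A $$ (i,k) * v $ k)"
  by (simp add: scalar_prod_def lessThan_atLeast0)

lemma dim_adj [simp]: "dim_row (adj K) = dim_col K" "dim_col (adj K) = dim_row K"
  by (auto simp: adj_def)

lemma index_adj [simp]: "i < dim_col K \<Longrightarrow> j < dim_row K \<Longrightarrow> adj K $$ (i,j) = cnj (K $$ (j,i))"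
  by (auto simp: adj_def)

lemma adj_one: "adj (1\<^sub>m n) = 1\<^sub>m n"
  by (rule eq_matI) (auto simp: adj_def)

lemma dim_kron [simp]:
  "dim_row (kron A B) = dim_row A * dim_row B" "dim_col (kron A B) = dim_col A * dim_col B"
  by (auto simp: kron_def)

lemma index_kron:
  "i < dim_row A \<Longrightarrow> j < dim_row B \<Longrightarrow> k < dim_col A \<Longrightarrow> l < dim_col B \<Longrightarrow>
   kron A B $$ (i * dim_row B + j, k * dim_col B + l) = A $$ (i,k) * B $$ (j,l)"
  by (simp add: kron_def pair_index_less)

lemma kron_one_one: "kron (1\<^sub>m a) (1\<^sub>m b) = 1\<^sub>m (a*b)"
proof (rule eq_matI)
  fix r c assume "r < dim_row (1\<^sub>m (a*b) :: complex mat)" "c < dim_col (1\<^sub>m (a*b) :: complex mat)"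
  then have "r < a*b" "c < a*b" by auto
  then obtain r1 r2 c1 c2 where rc: "r = r1*b+r2" "c = c1*b+c2" "r1 < a" "r2 < b" "c1 < a" "c2 < b"
    by (metis pair_index_cases)
  then show "kron (1\<^sub>m a) (1\<^sub>m b) $$ (r,c) = 1\<^sub>m (a*b) $$ (r,c)"
    using index_kron[of r1 "1\<^sub>m a" r2 "1\<^sub>m b" c1 c2] pair_index_less[of r1 a r2 b]
      pair_index_less[of c1 a c2 b] by (auto simp: pair_index_eq_iff)
qed auto

lemma kron_mult_kron:
  assumes "dim_col G1 = dim_row A" "dim_col G2 = dim_row B"
  shows "kron G1 G2 * kron A B = kron (G1 * A) (G2 * B)"
proof (rule eq_matI)
  fix r c assume "r < dim_row (kron (G1*A) (G2*B))" and "c < dim_col (kron (G1*A) (G2*B))"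
  then have "r < dim_row G1 * dim_row G2" "c < dim_col A * dim_col B" by auto
  then obtain r1 r2 c1 c2 where rc: "r = r1 * dim_row G2 + r2" "c = c1 * dim_col B + c2"
    and lt: "r1 < dim_row G1" "r2 < dim_row G2" "c1 < dim_col A" "c2 < dim_col B"
    by (metis pair_index_cases)
  have "(kron G1 G2 * kron A B) $$ (r,c) = (\<Sum>s<dim_col G1 * dim_col G2. kron G1 G2 $$ (r,s) * kron A B $$ (s,c))"
    using lt assms by (subst index_mult_mat_sum) (auto simp: rc pair_index_less)
  also have "\<dots> = (\<Sum>s1<dim_col G1. \<Sum>s2<dim_col G2. (G1 $$ (r1,s1) * A $$ (s1,c1)) * (G2 $$ (r2,s2) * B $$ (s2,c2)))"
    unfolding sum_lessThan_mult
  proof (intro sum.cong refl)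
    fix s1 s2 assume s: "s1 \<in> {..<dim_col G1}" "s2 \<in> {..<dim_col G2}"
    have "kron G1 G2 $$ (r, s1 * dim_col G2 + s2) = G1 $$ (r1,s1) * G2 $$ (r2,s2)"
      using index_kron[of r1 G1 r2 G2 s1 s2] s lt by (simp add: rc)
    moreover have "kron A B $$ (s1 * dim_col G2 + s2, c) = A $$ (s1,c1) * B $$ (s2,c2)"
      using index_kron[of s1 A s2 B c1 c2] s lt assms by (simp add: rc)
    ultimately show "kron G1 G2 $$ (r, s1 * dim_col G2 + s2) * kron A B $$ (s1 * dim_col G2 + s2, c)
        = (G1 $$ (r1,s1) * A $$ (s1,c1)) * (G2 $$ (r2,s2) * B $$ (s2,c2))"
      by (simp add: ac_simps)
  qed
  also have "\<dots> = (\<Sum>s1<dim_col G1. G1 $$ (r1,s1) * A $$ (s1,c1)) * (\<Sum>s2<dim_col G2. G2 $$ (r2,s2) * B $$ (s2,c2))"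
    by (simp add: sum_product)
  also have "\<dots> = (G1 * A) $$ (r1,c1) * (G2 * B) $$ (r2,c2)"
    using lt assms by (simp only: index_mult_mat_sum)
  also have "\<dots> = kron (G1*A) (G2*B) $$ (r,c)"
    using index_kron[of r1 "G1*A" r2 "G2*B" c1 c2] lt by (simp add: rc)
  finally show "(kron G1 G2 * kron A B) $$ (r,c) = kron (G1*A) (G2*B) $$ (r,c)" .
qed auto

lemma index_kron_mult_vec:
  assumes "A \<in> carrier_mat p q" "B \<in> carrier_mat r s" "dim_vec w = q*s" "a < p" "b < r"
  shows "(kron A B *\<^sub>v w) $ (a*r+b) = (\<Sum>i<q. \<Sum>j<s. A $$ (a,i) * B $$ (b,j) * w $ (i*s+j))"
proof -
  have "(kron A B *\<^sub>v w) $ (a*r+b) = (\<Sum>c<q*s. kron A B $$ (a*r+b, c) * w $ c)"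
    using assms by (subst index_mult_mat_vec_sum) (auto simp: pair_index_less)
  also have "\<dots> = (\<Sum>i<q. \<Sum>j<s. A $$ (a,i) * B $$ (b,j) * w $ (i*s+j))"
    unfolding sum_lessThan_mult using assms index_kron[of a A b B] by (intro sum.cong refl) auto
  finally show ?thesis .
qed

lemma index_kron_one_mult_vec:
  assumes "C \<in> carrier_mat d d" "dim_vec w = d*d" "i < d" "j < d"
  shows "(kron (1\<^sub>m d) C *\<^sub>v w) $ (i*d+j) = (\<Sum>l<d. C $$ (j,l) * w $ (i*d+l))"
proof -
  have "(kron (1\<^sub>m d) C *\<^sub>v w) $ (i*d+j) = (\<Sum>i'<d. \<Sum>l<d. 1\<^sub>m d $$ (i,i') * C $$ (j,l) * w $ (i'*d+l))"
    using index_kron_mult_vec[OF one_carrier_mat assms] .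
  also have "\<dots> = (\<Sum>i'<d. if i' = i then (\<Sum>l<d. C $$ (j,l) * w $ (i*d+l)) else 0)"
    using assms by (intro sum.cong refl) auto
  finally show ?thesis using assms by simp
qed

definition gram :: "complex mat \<Rightarrow> nat \<Rightarrow> nat \<Rightarrow> complex" where
  "gram K r c = (\<Sum>s<dim_row K. cnj (K $$ (s,r)) * K $$ (s,c))"

definition kraus_complete :: "nat \<Rightarrow> complex mat list \<Rightarrow> bool" where
  "kraus_complete n Ks \<longleftrightarrow>
     (\<forall>r<n. \<forall>c<n. sum_list (map (\<lambda>K. gram K r c) Ks) = (if r = c then 1 else 0))"

lemma gram_one_mat: "i < n \<Longrightarrow> j < n \<Longrightarrow> gram (1\<^sub>m n) i j = (if i = j then 1 else 0)"
proof -
  assume ij: "i < n" "j < n"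
  have "gram (1\<^sub>m n) i j = (\<Sum>s<n. (if s = i then 1 else 0) * (if s = j then 1 else 0))"
    using ij by (auto simp: gram_def intro!: sum.cong)
  also have "\<dots> = (\<Sum>s<n. if s = i then (if i = j then 1 else 0) else 0)"
    by (intro sum.cong) auto
  finally show ?thesis using ij by simp
qed

lemma gram_kron:
  assumes A: "A \<in> carrier_mat a' a" and B: "B \<in> carrier_mat b' b"
    and "r1 < a" "r2 < b" "c1 < a" "c2 < b"
  shows "gram (kron A B) (r1*b+r2) (c1*b+c2) = gram A r1 c1 * gram B r2 c2"
proof -
  have "gram (kron A B) (r1*b+r2) (c1*b+c2)
      = (\<Sum>s1<a'. \<Sum>s2<b'. cnj (kron A B $$ (s1*b'+s2, r1*b+r2)) * kron A B $$ (s1*b'+s2, c1*b+c2))"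
    using A B by (simp add: gram_def sum_lessThan_mult)
  also have "\<dots> = (\<Sum>s1<a'. \<Sum>s2<b'. (cnj (A $$ (s1,r1)) * A $$ (s1,c1)) * (cnj (B $$ (s2,r2)) * B $$ (s2,c2)))"
  proof (intro sum.cong refl)
    fix s1 s2 assume "s1 \<in> {..<a'}" "s2 \<in> {..<b'}"
    then have "kron A B $$ (s1*b'+s2, r1*b+r2) = A $$ (s1,r1) * B $$ (s2,r2)"
      and "kron A B $$ (s1*b'+s2, c1*b+c2) = A $$ (s1,c1) * B $$ (s2,c2)"
      using assms index_kron[of s1 A s2 B] by auto
    then show "cnj (kron A B $$ (s1*b'+s2, r1*b+r2)) * kron A B $$ (s1*b'+s2, c1*b+c2)
        = (cnj (A $$ (s1,r1)) * A $$ (s1,c1)) * (cnj (B $$ (s2,r2)) * B $$ (s2,c2))"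
      by (simp add: ac_simps)
  qed
  also have "\<dots> = gram A r1 c1 * gram B r2 c2"
    using A B by (simp add: gram_def sum_product)
  finally show ?thesis .
qed

lemma gram_mult:
  assumes G: "G \<in> carrier_mat p q" and K: "K \<in> carrier_mat q n" and "r < n" "c < n"
  shows "gram (G * K) r c = (\<Sum>t<q. \<Sum>t'<q. cnj (K $$ (t,r)) * K $$ (t',c) * gram G t t')"
proof -
  have "gram (G * K) r c = (\<Sum>s<p. cnj (\<Sum>t<q. G $$ (s,t) * K $$ (t,r)) * (\<Sum>t'<q. G $$ (s,t') * K $$ (t',c)))"
    using assms by (auto simp: gram_def index_mult_mat_sum simp del: index_mult_mat(1) intro!: sum.cong)
  also have "\<dots> = (\<Sum>s<p. \<Sum>t<q. \<Sum>t'<q. cnj (K $$ (t,r)) * K $$ (t',c) * (cnj (G $$ (s,t)) * G $$ (s,t')))"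
    by (simp add: sum_product sum_distrib_left ac_simps)
  also have "\<dots> = (\<Sum>t<q. \<Sum>t'<q. \<Sum>s<p. cnj (K $$ (t,r)) * K $$ (t',c) * (cnj (G $$ (s,t)) * G $$ (s,t')))"
    by (subst sum.swap) (simp add: sum.swap[of _ "{..<p}"])
  also have "\<dots> = (\<Sum>t<q. \<Sum>t'<q. cnj (K $$ (t,r)) * K $$ (t',c) * gram G t t')"
    using G by (simp add: gram_def sum_distrib_left)
  finally show ?thesis .
qed

lemma kraus_complete_if_foldr:
  assumes "\<forall>K\<in>set Ks. K \<in> carrier_mat m n"
    and "foldr (\<lambda>K S. adj K * K + S) Ks (0\<^sub>m n n) = 1\<^sub>m n"
  shows "kraus_complete n Ks"
proof -
  have "foldr (\<lambda>K S. adj K * K + S) Ks (0\<^sub>m n n) \<in> carrier_mat n n \<and>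
    (\<forall>i<n. \<forall>j<n. foldr (\<lambda>K S. adj K * K + S) Ks (0\<^sub>m n n) $$ (i,j) = sum_list (map (\<lambda>K. gram K i j) Ks))"
    using assms(1)
  proof (induction Ks)
    case (Cons K Ks)
    then have "K \<in> carrier_mat m n" by auto
    then have "(adj K * K) $$ (i,j) = gram K i j" if "i < n" "j < n" for i j
      using that by (subst index_mult_mat_sum) (auto simp: gram_def)
    then show ?case using Cons by auto
  qed auto
  then show ?thesis using assms(2) by (simp add: kraus_complete_def)
qed

lemma kraus_complete_kron_one_right:
  assumes "\<forall>K\<in>set Ks. K \<in> carrier_mat a' a" and "kraus_complete a Ks"
  shows "kraus_complete (a*b) (map (\<lambda>K. kron K (1\<^sub>m b)) Ks)"
  unfolding kraus_complete_def
proof (intro allI impI)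
  fix r c assume "r < a*b" "c < a*b"
  then obtain r1 r2 c1 c2 where rc: "r = r1*b+r2" "c = c1*b+c2" "r1 < a" "r2 < b" "c1 < a" "c2 < b"
    by (metis pair_index_cases)
  have "sum_list (map (\<lambda>K. gram K r c) (map (\<lambda>K. kron K (1\<^sub>m b)) Ks))
      = sum_list (map (\<lambda>K. gram K r1 c1 * (if r2 = c2 then 1 else 0)) Ks)"
    unfolding map_map o_def
  proof (rule sum_list_map_cong)
    fix K assume "K \<in> set Ks"
    then show "gram (kron K (1\<^sub>m b)) r c = gram K r1 c1 * (if r2 = c2 then 1 else 0)"
      using assms(1) rc gram_kron[of K a' a "1\<^sub>m b" b b r1 r2 c1 c2] by (simp add: gram_one_mat)
  qed
  also have "\<dots> = (if r = c then 1 else 0)"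
    using assms(2) rc by (auto simp: kraus_complete_def sum_list_mult_const pair_index_eq_iff)
  finally show "sum_list (map (\<lambda>K. gram K r c) (map (\<lambda>K. kron K (1\<^sub>m b)) Ks)) = (if r = c then 1 else 0)" .
qed

lemma kraus_complete_kron_one_left:
  assumes "\<forall>K\<in>set Ks. K \<in> carrier_mat b' b" and "kraus_complete b Ks"
  shows "kraus_complete (a*b) (map (kron (1\<^sub>m a)) Ks)"
  unfolding kraus_complete_def
proof (intro allI impI)
  fix r c assume "r < a*b" "c < a*b"
  then obtain r1 r2 c1 c2 where rc: "r = r1*b+r2" "c = c1*b+c2" "r1 < a" "r2 < b" "c1 < a" "c2 < b"
    by (metis pair_index_cases)
  have "sum_list (map (\<lambda>K. gram K r c) (map (kron (1\<^sub>m a)) Ks))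
      = sum_list (map (\<lambda>K. (if r1 = c1 then 1 else 0) * gram K r2 c2) Ks)"
    unfolding map_map o_def
  proof (rule sum_list_map_cong)
    fix K assume "K \<in> set Ks"
    then show "gram (kron (1\<^sub>m a) K) r c = (if r1 = c1 then 1 else 0) * gram K r2 c2"
      using assms(1) rc gram_kron[of "1\<^sub>m a" a a K b' b r1 r2 c1 c2] by (simp add: gram_one_mat)
  qed
  also have "\<dots> = (if r = c then 1 else 0)"
    using assms(2) rc by (auto simp: kraus_complete_def sum_list_const_mult pair_index_eq_iff)
  finally show "sum_list (map (\<lambda>K. gram K r c) (map (kron (1\<^sub>m a)) Ks)) = (if r = c then 1 else 0)" .
qed

lemma sum_gram_mult_complete:
  assumes Gs: "\<forall>G\<in>set Gs. G \<in> carrier_mat p q" "kraus_complete q Gs"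
    and K: "K \<in> carrier_mat q n" and "r < n" "c < n"
  shows "sum_list (map (\<lambda>G. gram (G * K) r c) Gs) = gram K r c"
proof -
  have "sum_list (map (\<lambda>G. gram (G * K) r c) Gs)
      = sum_list (map (\<lambda>G. \<Sum>t<q. \<Sum>t'<q. cnj (K $$ (t,r)) * K $$ (t',c) * gram G t t') Gs)"
    using assms gram_mult by (intro sum_list_map_cong) auto
  also have "\<dots> = (\<Sum>t<q. \<Sum>t'<q. cnj (K $$ (t,r)) * K $$ (t',c) * sum_list (map (\<lambda>G. gram G t t') Gs))"
    by (simp add: sum_list_map_sum_swap sum_list_const_mult)
  also have "\<dots> = (\<Sum>t<q. \<Sum>t'<q. cnj (K $$ (t,r)) * K $$ (t',c) * (if t = t' then 1 else 0))"
    using Gs(2) unfolding kraus_complete_def by (intro sum.cong refl) auto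
  also have "\<dots> = (\<Sum>t<q. cnj (K $$ (t,r)) * K $$ (t,c))"
    by (intro sum.cong refl) (simp add: if_distrib sum.delta cong: if_cong)
  also have "\<dots> = gram K r c" using K by (simp add: gram_def)
  finally show ?thesis .
qed

lemma kraus_complete_compose:
  assumes E: "\<forall>K\<in>set (concat E). K \<in> carrier_mat m n" "kraus_complete n (concat E)"
    and F: "\<And>k. k < length E \<Longrightarrow> (\<forall>G\<in>set (concat (F k)). G \<in> carrier_mat p m) \<and> kraus_complete m (concat (F k))"
  shows "kraus_complete n
     (concat (concat (map (\<lambda>k. map (\<lambda>Gs. concat (map (\<lambda>G. map (\<lambda>K. G * K) (E ! k)) Gs)) (F k)) [0..<length E])))"
  unfolding kraus_complete_def
proof (intro allI impI)
  fix r c assume rc: "r < n" "c < n"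
  have EkE: "K \<in> set (concat E)" if "k < length E" "K \<in> set (E ! k)" for k K
    using that nth_mem by fastforce
  have "sum_list (map (\<lambda>X. gram X r c)
      (concat (concat (map (\<lambda>k. map (\<lambda>Gs. concat (map (\<lambda>G. map (\<lambda>K. G * K) (E ! k)) Gs)) (F k)) [0..<length E]))))
    = sum_list (map (\<lambda>k. sum_list (map (\<lambda>K. sum_list (map (\<lambda>G. gram (G * K) r c) (concat (F k)))) (E ! k))) [0..<length E])"
    by (simp add: sum_list_map_concat o_def sum_list_map_swap[of _ "E ! _"])
  also have "\<dots> = sum_list (map (\<lambda>k. sum_list (map (\<lambda>K. gram K r c) (E ! k))) [0..<length E])"
    using E(1) F rc EkE by (intro sum_list_map_cong sum_gram_mult_complete[where p = p]) auto
  also have "\<dots> = sum_list (map (\<lambda>Ks. sum_list (map (\<lambda>K. gram K r c) Ks)) E)"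
    by (rule sum_list_map_upt_nth)
  also have "\<dots> = sum_list (map (\<lambda>K. gram K r c) (concat E))"
    by (simp add: sum_list_map_concat)
  finally show "sum_list (map (\<lambda>X. gram X r c)
      (concat (concat (map (\<lambda>k. map (\<lambda>Gs. concat (map (\<lambda>G. map (\<lambda>K. G * K) (E ! k)) Gs)) (F k)) [0..<length E]))))
    = (if r = c then 1 else 0)"
    using E(2) rc by (simp add: kraus_complete_def)
qed

section \<open>LOCC operations\<close>

definition product_op :: "nat \<Rightarrow> nat \<Rightarrow> nat \<Rightarrow> nat \<Rightarrow> complex mat \<Rightarrow> bool" where
  "product_op a' a b' b K \<longleftrightarrow> (\<exists>A B. A \<in> carrier_mat a' a \<and> B \<in> carrier_mat b' b \<and> K = kron A B)"

lemma product_op_carrier: "product_op a' a b' b K \<Longrightarrow> K \<in> carrier_mat (a'*b') (a*b)"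
  unfolding product_op_def by auto

lemma product_op_mult:
  "product_op a'' a' b'' b' G \<Longrightarrow> product_op a' a b' b K \<Longrightarrow> product_op a'' a b'' b (G * K)"
  unfolding product_op_def
proof (elim exE conjE)
  fix A1 B1 A2 B2
  assume "A1 \<in> carrier_mat a'' a'" "B1 \<in> carrier_mat b'' b'" "G = kron A1 B1"
    and "A2 \<in> carrier_mat a' a" "B2 \<in> carrier_mat b' b" "K = kron A2 B2"
  then show "\<exists>A B. A \<in> carrier_mat a'' a \<and> B \<in> carrier_mat b'' b \<and> G * K = kron A B"
    by (intro exI[of _ "A1 * A2"] exI[of _ "B1 * B2"]) (auto simp: kron_mult_kron)
qed

lemma LOCC_instr_product_complete:
  "LOCC_instr a b a' b' E \<Longrightarrow> (\<forall>K\<in>set (concat E). product_op a' a b' b K) \<and> kraus_complete (a*b) (concat E)"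
proof (induction rule: LOCC_instr.induct)
  case (alice KKs a' a b)
  then have KKs: "\<forall>K\<in>set (concat KKs). K \<in> carrier_mat a' a" by auto
  have "kraus_complete (a*b) (concat (map (map (\<lambda>K. kron K (1\<^sub>m b))) KKs))"
    unfolding map_concat[symmetric]
    by (rule kraus_complete_kron_one_right[OF KKs kraus_complete_if_foldr[OF KKs alice.hyps(2)]])
  moreover have "product_op a' a b b K'" if "K' \<in> set (concat (map (map (\<lambda>K. kron K (1\<^sub>m b))) KKs))" for K'
  proof -
    from that obtain K where "K \<in> set (concat KKs)" "K' = kron K (1\<^sub>m b)"
      unfolding map_concat[symmetric] by auto
    then show ?thesis using KKs one_carrier_mat unfolding product_op_def by blast
  qed
  ultimately show ?case by blast
next
  case (bob KKs b' b a)
  then have KKs: "\<forall>K\<in>set (concat KKs). K \<in> carrier_mat b' b" by auto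
  have "kraus_complete (a*b) (concat (map (map (kron (1\<^sub>m a))) KKs))"
    unfolding map_concat[symmetric]
    by (rule kraus_complete_kron_one_left[OF KKs kraus_complete_if_foldr[OF KKs bob.hyps(2)]])
  moreover have "product_op a a b' b K'" if "K' \<in> set (concat (map (map (kron (1\<^sub>m a))) KKs))" for K'
  proof -
    from that obtain K where "K \<in> set (concat KKs)" "K' = kron (1\<^sub>m a) K"
      unfolding map_concat[symmetric] by auto
    then show ?thesis using KKs one_carrier_mat unfolding product_op_def by blast
  qed
  ultimately show ?case by blast
next
  case (comp a b a' b' E a'' b'' F)
  have E: "\<forall>K\<in>set (concat E). product_op a' a b' b K" "kraus_complete (a*b) (concat E)"
    using comp by auto
  have F: "(\<forall>G\<in>set (concat (F k)). product_op a'' a' b'' b' G) \<and> kraus_complete (a'*b') (concat (F k))"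
    if "k < length E" for k
    using comp that by auto
  have "product_op a'' a b'' b X"
    if "X \<in> set (concat (concat (map (\<lambda>k. map (\<lambda>Gs. concat (map (\<lambda>G. map (\<lambda>K. G * K) (E ! k)) Gs)) (F k)) [0..<length E])))"
    for X
  proof -
    from that obtain k Gs G K where k: "k < length E" and "Gs \<in> set (F k)" "G \<in> set Gs"
      and K: "K \<in> set (E ! k)" and X: "X = G * K"
      by auto
    then have G: "G \<in> set (concat (F k))" by auto
    have "K \<in> set (concat E)" using K nth_mem[OF k] by auto
    then show ?thesis using E(1) F[OF k] G unfolding X by (blast intro: product_op_mult)
  qed
  moreover have "kraus_complete (a*b)
     (concat (concat (map (\<lambda>k. map (\<lambda>Gs. concat (map (\<lambda>G. map (\<lambda>K. G * K) (E ! k)) Gs)) (F k)) [0..<length E])))"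
    using E F product_op_carrier
    by (intro kraus_complete_compose[where m = "a'*b'" and p = "a''*b''"]) blast+
  ultimately show ?case by blast
qed

lemma LOCC_channel_product_complete:
  "LOCC_channel d Ks \<Longrightarrow> (\<forall>K\<in>set Ks. product_op d d d d K) \<and> kraus_complete (d*d) Ks"
  unfolding LOCC_channel_def using LOCC_instr_product_complete by blast

section \<open>Elementary inequalities for complex sums\<close>

lemma sum_cmod_sq_eq_sum_mult_cnj: "complex_of_real (\<Sum>a\<in>S. cmod (f a) ^ 2) = (\<Sum>a\<in>S. f a * cnj (f a))"
  by (simp only: of_real_sum complex_norm_square)

lemma Re_mult_cnj_le: "Re (z * cnj w) \<le> (cmod z ^ 2 + cmod w ^ 2) / 2"
proof -
  have "Re (z * cnj w) \<le> cmod (z * cnj w)" by (rule complex_Re_le_cmod)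
  also have "\<dots> = cmod z * cmod w" by (simp add: norm_mult)
  also have "\<dots> \<le> (cmod z ^ 2 + cmod w ^ 2) / 2"
    using sum_squares_bound[of "cmod z" "cmod w"] by (simp add: power2_eq_square field_simps)
  finally show ?thesis .
qed

lemma Re_sum_mult_cnj_transpose_le:
  fixes Y :: "'a \<Rightarrow> 'a \<Rightarrow> complex"
  assumes "finite S"
  shows "Re (\<Sum>a\<in>S. \<Sum>b\<in>S. Y a b * cnj (Y b a)) \<le> (\<Sum>a\<in>S. \<Sum>b\<in>S. cmod (Y a b) ^ 2)"
proof -
  have "Re (\<Sum>a\<in>S. \<Sum>b\<in>S. Y a b * cnj (Y b a)) = (\<Sum>a\<in>S. \<Sum>b\<in>S. Re (Y a b * cnj (Y b a)))"
    by (simp add: Re_sum)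
  also have "\<dots> \<le> (\<Sum>a\<in>S. \<Sum>b\<in>S. (cmod (Y a b) ^ 2 + cmod (Y b a) ^ 2) / 2)"
    by (intro sum_mono Re_mult_cnj_le)
  also have "\<dots> = (\<Sum>a\<in>S. \<Sum>b\<in>S. cmod (Y a b) ^ 2) / 2 + (\<Sum>a\<in>S. \<Sum>b\<in>S. cmod (Y b a) ^ 2) / 2"
    by (simp add: sum.distrib add_divide_distrib sum_divide_distrib)
  also have "(\<Sum>a\<in>S. \<Sum>b\<in>S. cmod (Y b a) ^ 2) = (\<Sum>a\<in>S. \<Sum>b\<in>S. cmod (Y a b) ^ 2)"
    by (rule sum.swap)
  finally show ?thesis by simp
qed

lemma cmod_sum_mult_cnj_sq_le:
  fixes p q :: "'a \<Rightarrow> complex"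
  assumes "finite S"
  shows "cmod (\<Sum>a\<in>S. p a * cnj (q a)) ^ 2 \<le> (\<Sum>a\<in>S. cmod (p a) ^ 2) * (\<Sum>a\<in>S. cmod (q a) ^ 2)"
proof -
  let ?Y = "\<lambda>a b. p a * q b"
  let ?s = "\<Sum>a\<in>S. p a * cnj (q a)"
  have "cmod ?s ^ 2 = Re (?s * cnj ?s)"
    by (simp only: complex_norm_square[symmetric] Re_complex_of_real)
  also have "?s * cnj ?s = (\<Sum>a\<in>S. \<Sum>b\<in>S. ?Y a b * cnj (?Y b a))"
    by (simp add: sum_product ac_simps)
  also have "Re \<dots> \<le> (\<Sum>a\<in>S. \<Sum>b\<in>S. cmod (?Y a b) ^ 2)"
    by (rule Re_sum_mult_cnj_transpose_le[OF assms])
  also have "\<dots> = (\<Sum>a\<in>S. cmod (p a) ^ 2) * (\<Sum>a\<in>S. cmod (q a) ^ 2)"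
    by (simp add: sum_product norm_mult power_mult_distrib)
  finally show ?thesis .
qed

lemma cmod_add_sq: "cmod (z + w) ^ 2 = cmod z ^ 2 + cmod w ^ 2 + 2 * Re (z * cnj w)"
proof -
  have "complex_of_real (cmod (z + w) ^ 2) = (z+w) * cnj (z+w)" by (rule complex_norm_square)
  also have "\<dots> = z * cnj z + w * cnj w + (z * cnj w + cnj (z * cnj w))" by (simp add: algebra_simps)
  also have "\<dots> = complex_of_real (cmod z ^ 2 + cmod w ^ 2 + 2 * Re (z * cnj w))"
    by (simp only: complex_norm_square[symmetric] complex_add_cnj of_real_add of_real_mult)
  finally show ?thesis by (simp only: of_real_eq_iff)
qed

lemma sum_sum_mult_cnj_transpose_rank_two:
  fixes P Q R S :: "'a \<Rightarrow> complex"
  shows "(\<Sum>a\<in>T. \<Sum>b\<in>T. (P a * Q b + R a * S b) * cnj (P b * Q a + R b * S a)) =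
    (\<Sum>a\<in>T. P a * cnj (Q a)) * (\<Sum>b\<in>T. Q b * cnj (P b)) + (\<Sum>a\<in>T. P a * cnj (S a)) * (\<Sum>b\<in>T. Q b * cnj (R b))
    + (\<Sum>a\<in>T. R a * cnj (Q a)) * (\<Sum>b\<in>T. S b * cnj (P b)) + (\<Sum>a\<in>T. R a * cnj (S a)) * (\<Sum>b\<in>T. S b * cnj (R b))"
  by (simp add: sum_product sum.distrib[symmetric] algebra_simps)

lemma sum_sum_cmod_sq_rank_two:
  fixes P Q R S :: "'a \<Rightarrow> complex"
  assumes "finite T"
  shows "(\<Sum>a\<in>T. \<Sum>b\<in>T. cmod (P a * Q b + R a * S b) ^ 2) =
    (\<Sum>a\<in>T. cmod (P a) ^ 2) * (\<Sum>b\<in>T. cmod (Q b) ^ 2) + (\<Sum>a\<in>T. cmod (R a) ^ 2) * (\<Sum>b\<in>T. cmod (S b) ^ 2)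
    + 2 * Re ((\<Sum>a\<in>T. P a * cnj (R a)) * (\<Sum>b\<in>T. Q b * cnj (S b)))"
proof -
  have "(\<Sum>a\<in>T. \<Sum>b\<in>T. cmod (P a * Q b + R a * S b) ^ 2) =
     (\<Sum>a\<in>T. \<Sum>b\<in>T. cmod (P a) ^ 2 * cmod (Q b) ^ 2 + cmod (R a) ^ 2 * cmod (S b) ^ 2 + 2 * Re ((P a * cnj (R a)) * (Q b * cnj (S b))))"
    by (intro sum.cong refl) (simp add: cmod_add_sq norm_mult power_mult_distrib ac_simps)
  also have "\<dots> = (\<Sum>a\<in>T. \<Sum>b\<in>T. cmod (P a) ^ 2 * cmod (Q b) ^ 2) + (\<Sum>a\<in>T. \<Sum>b\<in>T. cmod (R a) ^ 2 * cmod (S b) ^ 2) + (\<Sum>a\<in>T. \<Sum>b\<in>T. 2 * Re ((P a * cnj (R a)) * (Q b * cnj (S b))))"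
    by (simp only: sum.distrib)
  also have "(\<Sum>a\<in>T. \<Sum>b\<in>T. cmod (P a) ^ 2 * cmod (Q b) ^ 2) = (\<Sum>a\<in>T. cmod (P a) ^ 2) * (\<Sum>b\<in>T. cmod (Q b) ^ 2)"
    by (simp only: sum_product)
  also have "(\<Sum>a\<in>T. \<Sum>b\<in>T. cmod (R a) ^ 2 * cmod (S b) ^ 2) = (\<Sum>a\<in>T. cmod (R a) ^ 2) * (\<Sum>b\<in>T. cmod (S b) ^ 2)"
    by (simp only: sum_product)
  also have "(\<Sum>a\<in>T. \<Sum>b\<in>T. 2 * Re ((P a * cnj (R a)) * (Q b * cnj (S b)))) = 2 * Re ((\<Sum>a\<in>T. P a * cnj (R a)) * (\<Sum>b\<in>T. Q b * cnj (S b)))"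
  proof -
    have "(\<Sum>a\<in>T. P a * cnj (R a)) * (\<Sum>b\<in>T. Q b * cnj (S b)) = (\<Sum>a\<in>T. \<Sum>b\<in>T. (P a * cnj (R a)) * (Q b * cnj (S b)))"
      by (rule sum_product)
    then have "Re ((\<Sum>a\<in>T. P a * cnj (R a)) * (\<Sum>b\<in>T. Q b * cnj (S b))) = (\<Sum>a\<in>T. \<Sum>b\<in>T. Re ((P a * cnj (R a)) * (Q b * cnj (S b))))"
      by (simp only: Re_sum)
    then show ?thesis by (simp only: sum_distrib_left)
  qed
  finally show ?thesis .
qed

lemma cmod_div_add_mult_sq:
  fixes u z :: complex and n w :: real
  assumes npos: "n > 0"
  shows "cmod (u / complex_of_real n + complex_of_real w * z) ^ 2
    = cmod u ^ 2 / n ^ 2 + (w ^ 2 * cmod z ^ 2 + 2 * w * Re (u * cnj z) / n)"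
proof -
  have "cmod (u / complex_of_real n + complex_of_real w * z) ^ 2 = cmod (u / complex_of_real n) ^ 2
      + cmod (complex_of_real w * z) ^ 2 + 2 * Re (u / complex_of_real n * cnj (complex_of_real w * z))"
    by (rule cmod_add_sq)
  also have "Re (u / complex_of_real n * cnj (complex_of_real w * z)) = w / n * Re (u * cnj z)"
  proof -
    have "u / complex_of_real n * cnj (complex_of_real w * z) = complex_of_real (w / n) * (u * cnj z)"
      by (simp add: field_simps)
    then show ?thesis by (simp add: algebra_simps add_divide_distrib)
  qed
  also have "cmod (u / complex_of_real n) ^ 2 = cmod u ^ 2 / n ^ 2"
    using npos by (simp add: norm_divide power_divide)
  also have "cmod (complex_of_real w * z) ^ 2 = w ^ 2 * cmod z ^ 2"
    by (simp add: norm_mult power_mult_distrib)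
  finally show ?thesis using npos by (simp add: field_simps)
qed

lemma cmod_add_weighted_sum_sq_le:
  fixes z :: "'a \<Rightarrow> complex" and w :: "'a \<Rightarrow> real"
  assumes I: "finite I" "I \<noteq> {}"
  shows "cmod (u + (\<Sum>m\<in>I. complex_of_real (w m) * z m)) ^ 2
    \<le> cmod u ^ 2 + (\<Sum>m\<in>I. real (card I) * w m ^ 2 * cmod (z m) ^ 2 + 2 * w m * Re (u * cnj (z m)))"
proof -
  define n where "n = real (card I)"
  have npos: "n > 0" unfolding n_def using I by (simp add: card_gt_0_iff)
  have cardIn: "real (card I) = n" unfolding n_def ..
  \<comment> \<open>Cauchy-Schwarz against the constant vector 1, after spreading u evenly over I\<close>
  define y where "y m = u / complex_of_real n + complex_of_real (w m) * z m" for m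
  have "(\<Sum>m\<in>I. u / complex_of_real n) = of_nat (card I) * (u / complex_of_real n)" by simp
  also have "complex_of_nat (card I) = complex_of_real n" using cardIn by (metis of_real_of_nat_eq)
  also have "complex_of_real n * (u / complex_of_real n) = u" using npos by simp
  finally have sz: "(\<Sum>m\<in>I. y m) = u + (\<Sum>m\<in>I. complex_of_real (w m) * z m)"
    unfolding y_def by (simp add: sum.distrib)
  have "cmod (\<Sum>m\<in>I. y m) ^ 2 = cmod (\<Sum>m\<in>I. y m * cnj 1) ^ 2" by simp
  also have "\<dots> \<le> (\<Sum>m\<in>I. cmod (y m) ^ 2) * (\<Sum>m\<in>I. cmod (1::complex) ^ 2)"
    by (rule cmod_sum_mult_cnj_sq_le[OF I(1)])
  also have "\<dots> = n * (\<Sum>m\<in>I. cmod (y m) ^ 2)" using cardIn by simp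
  also have "\<dots> = n * (\<Sum>m\<in>I. cmod u ^ 2 / n ^ 2 + (w m ^ 2 * cmod (z m) ^ 2 + 2 * w m * Re (u * cnj (z m)) / n))"
    by (simp only: y_def cmod_div_add_mult_sq[OF npos])
  also have "\<dots> = cmod u ^ 2 + (\<Sum>m\<in>I. n * w m ^ 2 * cmod (z m) ^ 2 + 2 * w m * Re (u * cnj (z m)))"
  proof -
    have "(\<Sum>m\<in>I. cmod u ^ 2 / n ^ 2 + (w m ^ 2 * cmod (z m) ^ 2 + 2 * w m * Re (u * cnj (z m)) / n))
        = real (card I) * (cmod u ^ 2 / n ^ 2) + (\<Sum>m\<in>I. w m ^ 2 * cmod (z m) ^ 2 + 2 * w m * Re (u * cnj (z m)) / n)"
      by (simp add: sum.distrib)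
    also have "real (card I) = n" by (rule cardIn)
    finally have e: "n * (\<Sum>m\<in>I. cmod u ^ 2 / n ^ 2 + (w m ^ 2 * cmod (z m) ^ 2 + 2 * w m * Re (u * cnj (z m)) / n))
        = n * (n * (cmod u ^ 2 / n ^ 2)) + (\<Sum>m\<in>I. n * (w m ^ 2 * cmod (z m) ^ 2 + 2 * w m * Re (u * cnj (z m)) / n))"
      by (simp add: distrib_left sum_distrib_left)
    have e2: "n * (n * (cmod u ^ 2 / n ^ 2)) = cmod u ^ 2" using npos by (simp add: power2_eq_square)
    have e3: "n * (w m ^ 2 * cmod (z m) ^ 2 + 2 * w m * Re (u * cnj (z m)) / n) = n * w m ^ 2 * cmod (z m) ^ 2 + 2 * w m * Re (u * cnj (z m))" for m
      using npos by (simp add: field_simps)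
    show ?thesis unfolding e e2 e3 ..
  qed
  finally show ?thesis unfolding sz cardIn .
qed

lemma quadratic_gap_ineq:
  fixes x c :: real and n :: real
  assumes "0 < x" "x < 1" "0 \<le> c" "c \<le> 1"
  shows "2*x*c + n*x^2 + (1-x^2)*(1-c^2) \<le> 1 + (n+1)*x^2 - x^2*(1-x)^2/4"
proof -
  have key: "(c-x)^2 + x^2*(1-c^2) \<ge> x^2*(1-x)^2/4"
  proof (cases "\<bar>c - x\<bar> \<ge> x*(1-x)/2")
    case True
    then have "(c-x)^2 \<ge> (x*(1-x)/2)^2" using assms
      by (metis abs_ge_zero abs_le_square_iff abs_of_nonneg mult_nonneg_nonneg divide_nonneg_pos
          less_eq_real_def diff_ge_0_iff_ge zero_less_numeral)
    moreover have "x^2*(1-c^2) \<ge> 0" using assms by (simp add: power_le_one)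
    ultimately show ?thesis by (simp add: power_mult_distrib power_divide)
  next
    case False
    then have "\<bar>c - x\<bar> < x*(1-x)/2" by linarith
    then have "c < x + x*(1-x)/2" using abs_ge_self[of "c-x"] by linarith
    moreover have "x + x*(1-x)/2 \<le> 1 - (1-x)/2"
    proof -
      have "x + x*(1-x)/2 = 1 - (1-x)/2 - (1-x)*(1-x)/2" by (simp add: field_simps)
      moreover have "0 \<le> (1-x)*(1-x)" by simp
      ultimately show ?thesis by linarith
    qed
    ultimately have "1 - c \<ge> (1-x)/2" by linarith
    moreover have "(1-c)*(1+c) \<ge> (1-c)*1" using assms by (intro mult_left_mono) auto
    moreover have "1 - c^2 = (1-c)*(1+c)" by (simp add: power2_eq_square algebra_simps)
    ultimately have "1 - c^2 \<ge> (1-x)/2" by (smt (verit))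
    then have "x^2*(1-c^2) \<ge> x^2*((1-x)/2)" using assms by (intro mult_left_mono) auto
    moreover have "x^2*((1-x)/2) \<ge> x^2*(1-x)^2/4"
    proof -
      have "(1-x)*(1-x) \<le> (1-x)*2" using assms by (intro mult_left_mono) auto
      then have "(1-x)^2/4 \<le> (1-x)/2" by (simp add: power2_eq_square)
      then have "x^2*((1-x)^2/4) \<le> x^2*((1-x)/2)" by (intro mult_left_mono) auto
      then show ?thesis by simp
    qed
    moreover have "(c-x)^2 \<ge> 0" by simp
    ultimately show ?thesis by linarith
  qed
  have "1 + (n+1)*x^2 - (2*x*c + n*x^2 + (1-x^2)*(1-c^2)) = (c-x)^2 + x^2*(1-c^2)"
    by (simp add: power2_eq_square algebra_simps)
  then show ?thesis using key by linarith
qed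

section \<open>States as sums of rank-one projections\<close>

definition vinner :: "complex vec \<Rightarrow> complex vec \<Rightarrow> complex" where
  "vinner u w = (\<Sum>i<dim_vec u. cnj (u$i) * w$i)"

definition sq_norm :: "complex vec \<Rightarrow> real" where
  "sq_norm v = (\<Sum>i<dim_vec v. cmod (v$i) ^ 2)"

lemma is_unit_vec_iff: "is_unit_vec n v \<longleftrightarrow> dim_vec v = n \<and> sq_norm v = 1"
  by (auto simp: is_unit_vec_def sq_norm_def)

lemma cmod_vinner_sq_le:
  assumes "dim_vec u = dim_vec w"
  shows "cmod (vinner u w) ^ 2 \<le> sq_norm u * sq_norm w"
proof -
  have "vinner u w = (\<Sum>i<dim_vec u. w$i * cnj (u$i))" unfolding vinner_def by (simp add: mult.commute)
  then have "cmod (vinner u w) ^ 2 \<le> (\<Sum>i<dim_vec u. cmod (w$i) ^ 2) * (\<Sum>i<dim_vec u. cmod (u$i) ^ 2)"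
    using cmod_sum_mult_cnj_sq_le[of "{..<dim_vec u}" "\<lambda>i. w$i" "\<lambda>i. u$i"] by simp
  then show ?thesis unfolding sq_norm_def using assms by (simp add: mult.commute)
qed

lemma of_real_sum_list: "complex_of_real (sum_list (map f xs)) = sum_list (map (\<lambda>x. complex_of_real (f x)) xs)"
  by (induction xs) auto

lemma sum_sq_norm_mult_complete:
  assumes C: "kraus_complete n Ks" and cK: "\<forall>K\<in>set Ks. K \<in> carrier_mat n n" and dy: "dim_vec y = n"
  shows "sum_list (map (\<lambda>K. sq_norm (K *\<^sub>v y)) Ks) = sq_norm y"
proof -
  have one: "complex_of_real (sq_norm (K *\<^sub>v y)) = (\<Sum>c<n. \<Sum>c'<n. y$c * cnj (y$c') * gram K c' c)" if K: "K \<in> carrier_mat n n" for K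
  proof -
    have dK: "dim_vec (K *\<^sub>v y) = n" using K by simp
    have "complex_of_real (sq_norm (K *\<^sub>v y)) = (\<Sum>r<n. (K *\<^sub>v y)$r * cnj ((K *\<^sub>v y)$r))"
      unfolding sq_norm_def dK by (rule sum_cmod_sq_eq_sum_mult_cnj)
    also have "\<dots> = (\<Sum>r<n. (\<Sum>c<n. K$$(r,c) * y$c) * cnj (\<Sum>c'<n. K$$(r,c') * y$c'))"
      using K dy by (intro sum.cong refl) (simp add: index_mult_mat_vec_sum del: index_mult_mat_vec)
    also have "\<dots> = (\<Sum>r<n. \<Sum>c<n. \<Sum>c'<n. y$c * cnj (y$c') * (cnj (K$$(r,c')) * K$$(r,c)))"
    proof (rule sum.cong[OF refl])
      fix r
      have "(\<Sum>c<n. K$$(r,c) * y$c) * cnj (\<Sum>c'<n. K$$(r,c') * y$c') = (\<Sum>c<n. \<Sum>c'<n. (K$$(r,c) * y$c) * cnj (K$$(r,c') * y$c'))"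
        by (simp only: cnj_sum sum_product)
      also have "\<dots> = (\<Sum>c<n. \<Sum>c'<n. y$c * cnj (y$c') * (cnj (K$$(r,c')) * K$$(r,c)))"
        by (intro sum.cong refl) (simp add: ac_simps)
      finally show "(\<Sum>c<n. K$$(r,c) * y$c) * cnj (\<Sum>c'<n. K$$(r,c') * y$c') = (\<Sum>c<n. \<Sum>c'<n. y$c * cnj (y$c') * (cnj (K$$(r,c')) * K$$(r,c)))" .
    qed
    also have "\<dots> = (\<Sum>c<n. \<Sum>r<n. \<Sum>c'<n. y$c * cnj (y$c') * (cnj (K$$(r,c')) * K$$(r,c)))"
      by (rule sum.swap)
    also have "\<dots> = (\<Sum>c<n. \<Sum>c'<n. \<Sum>r<n. y$c * cnj (y$c') * (cnj (K$$(r,c')) * K$$(r,c)))"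
      by (rule sum.cong[OF refl], rule sum.swap)
    also have "\<dots> = (\<Sum>c<n. \<Sum>c'<n. y$c * cnj (y$c') * gram K c' c)"
      using K unfolding gram_def by (simp add: sum_distrib_left)
    finally show ?thesis .
  qed
  have "complex_of_real (sum_list (map (\<lambda>K. sq_norm (K *\<^sub>v y)) Ks)) = sum_list (map (\<lambda>K. \<Sum>c<n. \<Sum>c'<n. y$c * cnj (y$c') * gram K c' c) Ks)"
    unfolding of_real_sum_list using cK one by (intro sum_list_map_cong) auto
  also have "\<dots> = (\<Sum>c<n. \<Sum>c'<n. y$c * cnj (y$c') * sum_list (map (\<lambda>K. gram K c' c) Ks))"
    by (simp add: sum_list_map_sum_swap sum_list_const_mult)
  also have "\<dots> = (\<Sum>c<n. \<Sum>c'<n. if c' = c then y$c * cnj (y$c) else 0)"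
    using C unfolding kraus_complete_def by (intro sum.cong refl) auto
  also have "\<dots> = (\<Sum>c<n. y$c * cnj (y$c))" by simp
  also have "\<dots> = complex_of_real (sq_norm y)" unfolding sq_norm_def dy by (rule sum_cmod_sq_eq_sum_mult_cnj[symmetric])
  finally show ?thesis by (simp only: of_real_eq_iff)
qed

definition rank_one_sum :: "nat \<Rightarrow> complex vec list \<Rightarrow> complex mat \<Rightarrow> bool" where
  "rank_one_sum m ys R \<longleftrightarrow> R \<in> carrier_mat m m \<and> (\<forall>y\<in>set ys. dim_vec y = m) \<and>
     (\<forall>i<m. \<forall>j<m. R$$(i,j) = sum_list (map (\<lambda>y. y$i * cnj (y$j)) ys))"

lemma index_mult_mult_adj_rank_one_sum:
  assumes K: "K \<in> carrier_mat n m" and R: "rank_one_sum m ys R" and ij: "i < n" "j < n"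
  shows "(K * R * adj K)$$(i,j) = sum_list (map (\<lambda>y. (K *\<^sub>v y)$i * cnj ((K *\<^sub>v y)$j)) ys)"
proof -
  have Rc: "R \<in> carrier_mat m m" and ys: "\<forall>y\<in>set ys. dim_vec y = m"
    and Re: "\<forall>i<m. \<forall>j<m. R$$(i,j) = sum_list (map (\<lambda>y. y$i * cnj (y$j)) ys)"
    using R unfolding rank_one_sum_def by auto
  have "(K * R * adj K)$$(i,j) = (\<Sum>t<m. (K*R)$$(i,t) * adj K $$ (t,j))"
    using K Rc ij by (subst index_mult_mat_sum) auto
  also have "\<dots> = (\<Sum>t<m. (\<Sum>s<m. K$$(i,s) * R$$(s,t)) * cnj (K$$(j,t)))"
    using K Rc ij by (intro sum.cong refl) (simp add: index_mult_mat_sum del: index_mult_mat(1))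
  also have "\<dots> = (\<Sum>t<m. \<Sum>s<m. sum_list (map (\<lambda>y. K$$(i,s) * y$s * (cnj (K$$(j,t)) * cnj (y$t))) ys))"
  proof (rule sum.cong[OF refl])
    fix t assume t: "t \<in> {..<m}"
    have "(\<Sum>s<m. K$$(i,s) * R$$(s,t)) * cnj (K$$(j,t)) = (\<Sum>s<m. K$$(i,s) * R$$(s,t) * cnj (K$$(j,t)))"
      by (simp add: sum_distrib_right)
    also have "\<dots> = (\<Sum>s<m. sum_list (map (\<lambda>y. K$$(i,s) * y$s * (cnj (K$$(j,t)) * cnj (y$t))) ys))"
    proof (rule sum.cong[OF refl])
      fix s assume s: "s \<in> {..<m}"
      show "K$$(i,s) * R$$(s,t) * cnj (K$$(j,t)) = sum_list (map (\<lambda>y. K$$(i,s) * y$s * (cnj (K$$(j,t)) * cnj (y$t))) ys)"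
        using Re s t by (simp add: sum_list_const_mult[symmetric] sum_list_mult_const[symmetric] ac_simps)
    qed
    finally show "(\<Sum>s<m. K$$(i,s) * R$$(s,t)) * cnj (K$$(j,t)) = (\<Sum>s<m. sum_list (map (\<lambda>y. K$$(i,s) * y$s * (cnj (K$$(j,t)) * cnj (y$t))) ys))" .
  qed
  also have "\<dots> = sum_list (map (\<lambda>y. \<Sum>t<m. \<Sum>s<m. K$$(i,s) * y$s * (cnj (K$$(j,t)) * cnj (y$t))) ys)"
    by (simp add: sum_list_map_sum_swap)
  also have "\<dots> = sum_list (map (\<lambda>y. (K *\<^sub>v y)$i * cnj ((K *\<^sub>v y)$j)) ys)"
  proof (rule sum_list_map_cong)
    fix y assume "y \<in> set ys"
    then have dy: "dim_vec y = m" using ys by auto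
    have "(K *\<^sub>v y)$i * cnj ((K *\<^sub>v y)$j) = (\<Sum>s<m. K$$(i,s) * y$s) * cnj (\<Sum>t<m. K$$(j,t) * y$t)"
      using K dy ij by (simp add: index_mult_mat_vec_sum del: index_mult_mat_vec)
    also have "\<dots> = (\<Sum>s<m. \<Sum>t<m. K$$(i,s) * y$s * (cnj (K$$(j,t)) * cnj (y$t)))"
      by (simp add: sum_product)
    also have "\<dots> = (\<Sum>t<m. \<Sum>s<m. K$$(i,s) * y$s * (cnj (K$$(j,t)) * cnj (y$t)))"
      by (rule sum.swap)
    finally show "(\<Sum>t<m. \<Sum>s<m. K$$(i,s) * y$s * (cnj (K$$(j,t)) * cnj (y$t))) = (K *\<^sub>v y)$i * cnj ((K *\<^sub>v y)$j)" ..
  qed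
  finally show ?thesis .
qed

lemma rank_one_sum_apply_kraus:
  assumes Ks: "\<forall>K\<in>set Ks. K \<in> carrier_mat n m" and R: "rank_one_sum m ys R"
  shows "rank_one_sum n (concat (map (\<lambda>K. map (\<lambda>y. K *\<^sub>v y) ys) Ks)) (apply_kraus n Ks R)"
  using Ks
proof (induction Ks)
  case Nil then show ?case by (auto simp: rank_one_sum_def apply_kraus_def)
next
  case (Cons K Ks)
  then have K: "K \<in> carrier_mat n m" and IH: "rank_one_sum n (concat (map (\<lambda>K. map (\<lambda>y. K *\<^sub>v y) ys) Ks)) (apply_kraus n Ks R)" by auto
  have Rc: "R \<in> carrier_mat m m" using R unfolding rank_one_sum_def by auto
  have AK: "apply_kraus n (K#Ks) R = K * R * adj K + apply_kraus n Ks R" by (simp add: apply_kraus_def)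
  have c: "apply_kraus n Ks R \<in> carrier_mat n n" using IH unfolding rank_one_sum_def by auto
  show ?case unfolding rank_one_sum_def
  proof (intro conjI allI impI)
    show "apply_kraus n (K#Ks) R \<in> carrier_mat n n" using c K Rc unfolding AK by auto
    show "\<forall>y\<in>set (concat (map (\<lambda>K. map (\<lambda>y. K *\<^sub>v y) ys) (K#Ks))). dim_vec y = n"
      using IH K unfolding rank_one_sum_def by auto
    fix i j assume ij: "i < n" "j < n"
    have "apply_kraus n (K#Ks) R $$ (i,j) = (K * R * adj K) $$ (i,j) + apply_kraus n Ks R $$ (i,j)"
      unfolding AK using c ij by simp
    also have "\<dots> = sum_list (map (\<lambda>y. y$i * cnj (y$j)) (map (\<lambda>y. K *\<^sub>v y) ys)) + sum_list (map (\<lambda>y. y$i * cnj (y$j)) (concat (map (\<lambda>K. map (\<lambda>y. K *\<^sub>v y) ys) Ks)))"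
      using index_mult_mult_adj_rank_one_sum[OF K R ij] IH ij unfolding rank_one_sum_def by (simp add: o_def)
    finally show "apply_kraus n (K#Ks) R $$ (i,j) = sum_list (map (\<lambda>y. y$i * cnj (y$j)) (concat (map (\<lambda>K. map (\<lambda>y. K *\<^sub>v y) ys) (K#Ks))))"
      by simp
  qed
qed

lemma rank_one_sum_ket_bra: "rank_one_sum (dim_vec v) [v] (ket_bra v)"
  by (auto simp: rank_one_sum_def ket_bra_def)

lemma Re_sum_list: "Re (sum_list xs) = sum_list (map Re xs)"
  by (induction xs) auto

lemma expect_rank_one_sum:
  assumes R: "rank_one_sum m ys R" and dP: "dim_vec \<Phi> = m"
  shows "expect \<Phi> R = sum_list (map (\<lambda>y. cmod (vinner \<Phi> y) ^ 2) ys)"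
proof -
  have Rc: "R \<in> carrier_mat m m" and ys: "\<forall>y\<in>set ys. dim_vec y = m"
    and Re: "\<forall>i<m. \<forall>j<m. R$$(i,j) = sum_list (map (\<lambda>y. y$i * cnj (y$j)) ys)"
    using R unfolding rank_one_sum_def by auto
  have "(\<Sum>i<dim_vec \<Phi>. cnj (\<Phi> $ i) * (R *\<^sub>v \<Phi>) $ i) = (\<Sum>i<m. cnj (\<Phi> $ i) * (\<Sum>j<m. R$$(i,j) * \<Phi>$j))"
  proof (rule sum.cong)
    show "{..<dim_vec \<Phi>} = {..<m}" using dP by simp
  next
    fix x assume "x \<in> {..<m}"
    then show "cnj (\<Phi> $ x) * (R *\<^sub>v \<Phi>) $ x = cnj (\<Phi> $ x) * (\<Sum>j<m. R$$(x,j) * \<Phi>$j)"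
      using Rc dP by (subst index_mult_mat_vec_sum) auto
  qed
  also have "\<dots> = (\<Sum>i<m. \<Sum>j<m. sum_list (map (\<lambda>y. (cnj (\<Phi> $ i) * y$i) * (\<Phi>$j * cnj (y$j))) ys))"
  proof (rule sum.cong[OF refl])
    fix i assume i: "i \<in> {..<m}"
    have "cnj (\<Phi> $ i) * (\<Sum>j<m. R$$(i,j) * \<Phi>$j) = (\<Sum>j<m. cnj (\<Phi> $ i) * R$$(i,j) * \<Phi>$j)"
      by (simp add: sum_distrib_left mult.assoc)
    also have "\<dots> = (\<Sum>j<m. sum_list (map (\<lambda>y. (cnj (\<Phi> $ i) * y$i) * (\<Phi>$j * cnj (y$j))) ys))"
    proof (rule sum.cong[OF refl])
      fix j assume j: "j \<in> {..<m}"
      show "cnj (\<Phi> $ i) * R$$(i,j) * \<Phi>$j = sum_list (map (\<lambda>y. (cnj (\<Phi> $ i) * y$i) * (\<Phi>$j * cnj (y$j))) ys)"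
        using Re i j by (simp add: sum_list_const_mult[symmetric] sum_list_mult_const[symmetric] ac_simps)
    qed
    finally show "cnj (\<Phi> $ i) * (\<Sum>j<m. R$$(i,j) * \<Phi>$j) = (\<Sum>j<m. sum_list (map (\<lambda>y. (cnj (\<Phi> $ i) * y$i) * (\<Phi>$j * cnj (y$j))) ys))" .
  qed
  also have "\<dots> = sum_list (map (\<lambda>y. \<Sum>i<m. \<Sum>j<m. (cnj (\<Phi> $ i) * y$i) * (\<Phi>$j * cnj (y$j))) ys)"
    by (simp add: sum_list_map_sum_swap)
  also have "\<dots> = sum_list (map (\<lambda>y. complex_of_real (cmod (vinner \<Phi> y) ^ 2)) ys)"
  proof (rule sum_list_map_cong)
    fix y
    have "complex_of_real (cmod (vinner \<Phi> y) ^ 2) = vinner \<Phi> y * cnj (vinner \<Phi> y)" by (rule complex_norm_square)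
    also have "\<dots> = (\<Sum>i<m. \<Sum>j<m. (cnj (\<Phi> $ i) * y$i) * (\<Phi>$j * cnj (y$j)))"
      unfolding vinner_def dP by (simp add: sum_product)
    finally show "(\<Sum>i<m. \<Sum>j<m. (cnj (\<Phi> $ i) * y$i) * (\<Phi>$j * cnj (y$j))) = complex_of_real (cmod (vinner \<Phi> y) ^ 2)" ..
  qed
  finally show ?thesis unfolding expect_def by (simp add: Re_sum_list o_def)
qed

lemma expect_apply_kraus_rho_out:
  assumes Ks: "\<forall>K\<in>set Ks. K \<in> carrier_mat (d*d) (d*d)" and As: "\<forall>A\<in>set As. A \<in> carrier_mat d d"
    and dP: "dim_vec \<Phi> = d*d" and dP': "dim_vec \<Phi>' = d*d"
  shows "expect \<Phi>' (apply_kraus (d*d) Ks (rho_out d As \<Phi>)) =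
     sum_list (map (\<lambda>K. sum_list (map (\<lambda>A. cmod (vinner \<Phi>' (K *\<^sub>v (kron (1\<^sub>m d) A *\<^sub>v \<Phi>))) ^ 2) As)) Ks)"
proof -
  have k1: "rank_one_sum (d*d) [\<Phi>] (ket_bra \<Phi>)" using rank_one_sum_ket_bra[of \<Phi>] unfolding dP .
  have cL: "\<forall>L\<in>set (map (kron (1\<^sub>m d)) As). L \<in> carrier_mat (d*d) (d*d)"
  proof
    fix L assume "L \<in> set (map (kron (1\<^sub>m d)) As)"
    then obtain A where A: "A \<in> set As" and L: "L = kron (1\<^sub>m d) A" by auto
    have "A \<in> carrier_mat d d" using A As by auto
    then show "L \<in> carrier_mat (d*d) (d*d)" unfolding L carrier_mat_def by simp
  qed
  have e1: "concat (map (\<lambda>K. map (\<lambda>y. K *\<^sub>v y) [\<Phi>]) (map (kron (1\<^sub>m d)) As)) = map (\<lambda>A. kron (1\<^sub>m d) A *\<^sub>v \<Phi>) As"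
    by (induction As) auto
  have e2: "rho_out d As \<Phi> = apply_kraus (d*d) (map (kron (1\<^sub>m d)) As) (ket_bra \<Phi>)"
    unfolding rho_out_def ..
  have k2: "rank_one_sum (d*d) (map (\<lambda>A. kron (1\<^sub>m d) A *\<^sub>v \<Phi>) As) (rho_out d As \<Phi>)"
    using rank_one_sum_apply_kraus[OF cL k1] unfolding e1 e2 .
  have k3: "rank_one_sum (d*d) (concat (map (\<lambda>K. map (\<lambda>y. K *\<^sub>v y) (map (\<lambda>A. kron (1\<^sub>m d) A *\<^sub>v \<Phi>) As)) Ks)) (apply_kraus (d*d) Ks (rho_out d As \<Phi>))"
    by (rule rank_one_sum_apply_kraus[OF Ks k2])
  show ?thesis using expect_rank_one_sum[OF k3 dP'] by (simp add: sum_list_map_concat o_def)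
qed

lemma rho_out_carrier:
  assumes As: "\<forall>A\<in>set As. A \<in> carrier_mat d d" and dp: "dim_vec \<psi> = d*d"
  shows "rho_out d As \<psi> \<in> carrier_mat (d*d) (d*d)"
proof -
  have k1: "rank_one_sum (d*d) [\<psi>] (ket_bra \<psi>)" using rank_one_sum_ket_bra[of \<psi>] unfolding dp .
  have cL: "\<forall>L\<in>set (map (kron (1\<^sub>m d)) As). L \<in> carrier_mat (d*d) (d*d)"
  proof
    fix L assume "L \<in> set (map (kron (1\<^sub>m d)) As)"
    then obtain A where A: "A \<in> set As" and L: "L = kron (1\<^sub>m d) A" by auto
    have "A \<in> carrier_mat d d" using A As by auto
    then show "L \<in> carrier_mat (d*d) (d*d)" unfolding L carrier_mat_def by simp
  qed
  show ?thesis using rank_one_sum_apply_kraus[OF cL k1] unfolding rho_out_def rank_one_sum_def by auto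
qed

lemma kron_carrier_mat: "A \<in> carrier_mat a' a \<Longrightarrow> B \<in> carrier_mat b' b \<Longrightarrow> kron A B \<in> carrier_mat (a'*b') (a*b)"
  unfolding carrier_mat_def by simp

lemma expect_apply_kraus_rho_out_le_1:
  assumes Ks: "\<forall>K\<in>set Ks. K \<in> carrier_mat (d*d) (d*d)" "kraus_complete (d*d) Ks"
    and As: "\<forall>A\<in>set As. A \<in> carrier_mat d d" "kraus_complete d As"
    and "is_unit_vec (d*d) \<psi>" "is_unit_vec (d*d) \<Phi>"
  shows "expect \<Phi> (apply_kraus (d*d) Ks (rho_out d As \<psi>)) \<le> 1"
proof -
  have \<psi>: "dim_vec \<psi> = d*d" "sq_norm \<psi> = 1" and \<Phi>: "dim_vec \<Phi> = d*d" "sq_norm \<Phi> = 1"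
    using assms(5,6) by (auto simp: is_unit_vec_iff)
  have lifted: "kraus_complete (d*d) (map (kron (1\<^sub>m d)) As)"
    by (rule kraus_complete_kron_one_left[OF As])
  have lifted_carrier: "\<forall>L\<in>set (map (kron (1\<^sub>m d)) As). L \<in> carrier_mat (d*d) (d*d)"
    using As(1) kron_carrier_mat[OF one_carrier_mat] by auto
  have "expect \<Phi> (apply_kraus (d*d) Ks (rho_out d As \<psi>))
      = sum_list (map (\<lambda>K. sum_list (map (\<lambda>A. cmod (vinner \<Phi> (K *\<^sub>v (kron (1\<^sub>m d) A *\<^sub>v \<psi>))) ^ 2) As)) Ks)"
    by (rule expect_apply_kraus_rho_out[OF Ks(1) As(1) \<psi>(1) \<Phi>(1)])
  also have "\<dots> \<le> sum_list (map (\<lambda>K. sum_list (map (\<lambda>A. sq_norm (K *\<^sub>v (kron (1\<^sub>m d) A *\<^sub>v \<psi>))) As)) Ks)"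
  proof (intro sum_list_mono)
    fix K A assume "K \<in> set Ks"
    then have "dim_row K = d*d" using Ks(1) carrier_matD(1) by blast
    then have "dim_vec \<Phi> = dim_vec (K *\<^sub>v (kron (1\<^sub>m d) A *\<^sub>v \<psi>))"
      using \<Phi>(1) by simp
    from cmod_vinner_sq_le[OF this]
    show "cmod (vinner \<Phi> (K *\<^sub>v (kron (1\<^sub>m d) A *\<^sub>v \<psi>))) ^ 2 \<le> sq_norm (K *\<^sub>v (kron (1\<^sub>m d) A *\<^sub>v \<psi>))"
      using \<Phi>(2) by simp
  qed
  also have "\<dots> = sum_list (map (\<lambda>A. sum_list (map (\<lambda>K. sq_norm (K *\<^sub>v (kron (1\<^sub>m d) A *\<^sub>v \<psi>))) Ks)) As)"
    by (rule sum_list_map_swap)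
  also have "\<dots> = sum_list (map (\<lambda>A. sq_norm (kron (1\<^sub>m d) A *\<^sub>v \<psi>)) As)"
  proof (rule sum_list_map_cong)
    fix A assume "A \<in> set As"
    then have "dim_row A = d" using As(1) carrier_matD(1) by blast
    then have "dim_vec (kron (1\<^sub>m d) A *\<^sub>v \<psi>) = d*d" by simp
    then show "sum_list (map (\<lambda>K. sq_norm (K *\<^sub>v (kron (1\<^sub>m d) A *\<^sub>v \<psi>))) Ks) = sq_norm (kron (1\<^sub>m d) A *\<^sub>v \<psi>)"
      by (rule sum_sq_norm_mult_complete[OF Ks(2,1)])
  qed
  also have "\<dots> = 1"
    using sum_sq_norm_mult_complete[OF lifted lifted_carrier \<psi>(1)] \<psi>(2) by (simp add: o_def)
  finally show ?thesis .
qed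

section \<open>Maximally entangled states and singlet fractions\<close>

lemma index_ptrace_B_ket_bra:
  assumes dP: "dim_vec \<Phi> = d*d" and i: "i < d" and k: "k < d"
  shows "ptrace_B d d (ket_bra \<Phi>) $$ (i,k) = (\<Sum>j<d. \<Phi>$(i*d+j) * cnj (\<Phi>$(k*d+j)))"
  using i k dP by (auto simp: ptrace_B_def ket_bra_def pair_index_less intro!: sum.cong)

lemma max_ent_row_inner:
  assumes "max_ent d \<Phi>" and i: "i < d" and k: "k < d"
  shows "(\<Sum>j<d. \<Phi>$(i*d+j) * cnj (\<Phi>$(k*d+j))) = (if i = k then 1 / of_nat d else 0)"
proof -
  have dP: "dim_vec \<Phi> = d*d" and eq: "ptrace_B d d (ket_bra \<Phi>) = (1 / of_nat d) \<cdot>\<^sub>m (1\<^sub>m d)"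
    using assms unfolding max_ent_def is_unit_vec_def by auto
  have "ptrace_B d d (ket_bra \<Phi>) $$ (i,k) = (\<Sum>j<d. \<Phi>$(i*d+j) * cnj (\<Phi>$(k*d+j)))"
    by (rule index_ptrace_B_ket_bra[OF dP i k])
  moreover have "((1 / (of_nat d :: complex)) \<cdot>\<^sub>m (1\<^sub>m d)) $$ (i,k) = (if i = k then 1 / of_nat d else 0)"
    using i k by simp
  ultimately show ?thesis using eq by simp
qed

lemma max_ent_col_inner:
  assumes me: "max_ent d \<Phi>" and j: "j < d" and l: "l < d"
  shows "(\<Sum>i<d. cnj (\<Phi>$(i*d+j)) * \<Phi>$(i*d+l)) = (if j = l then 1 / of_nat d else 0)"
proof -
  define A where "A = mat d d (\<lambda>(i,j). of_nat d * \<Phi>$(i*d+j))"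
  define B where "B = mat d d (\<lambda>(j,k). cnj (\<Phi>$(k*d+j)))"
  have d0: "d > 0" using j by auto
  have cA: "A \<in> carrier_mat d d" and cB: "B \<in> carrier_mat d d" unfolding A_def B_def by auto
  have AB: "A * B = 1\<^sub>m d"
  proof (rule eq_matI)
    fix i k assume "i < dim_row (1\<^sub>m d)" "k < dim_col (1\<^sub>m d)"
    then have ik: "i < d" "k < d" by auto
    have "(A * B) $$ (i,k) = (\<Sum>j<d. of_nat d * \<Phi>$(i*d+j) * cnj (\<Phi>$(k*d+j)))"
      using ik cA cB by (subst index_mult_mat_sum) (auto simp: A_def B_def)
    also have "\<dots> = of_nat d * (\<Sum>j<d. \<Phi>$(i*d+j) * cnj (\<Phi>$(k*d+j)))"
      by (simp add: sum_distrib_left mult.assoc)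
    also have "\<dots> = (1\<^sub>m d) $$ (i,k)" using max_ent_row_inner[OF me ik] ik d0 by simp
    finally show "(A * B) $$ (i,k) = (1\<^sub>m d) $$ (i,k)" .
  qed (use cA cB in auto)
  \<comment> \<open>the rows of the coefficient matrix are orthogonal, hence so are its columns\<close>
  have BA: "B * A = 1\<^sub>m d" by (rule mat_mult_left_right_inverse[OF cA cB AB])
  have "(B * A) $$ (j,l) = (\<Sum>i<d. cnj (\<Phi>$(i*d+j)) * (of_nat d * \<Phi>$(i*d+l)))"
    using j l cA cB by (subst index_mult_mat_sum) (auto simp: A_def B_def)
  also have "\<dots> = of_nat d * (\<Sum>i<d. cnj (\<Phi>$(i*d+j)) * \<Phi>$(i*d+l))"
    by (simp add: sum_distrib_left ac_simps)
  finally have e0: "(B * A) $$ (j,l) = of_nat d * (\<Sum>i<d. cnj (\<Phi>$(i*d+j)) * \<Phi>$(i*d+l))" .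
  have "(B * A) $$ (j,l) = (if j = l then 1 else 0)"
    using BA j l by (simp only: index_one_mat)
  then have e: "of_nat d * (\<Sum>i<d. cnj (\<Phi>$(i*d+j)) * \<Phi>$(i*d+l)) = (if j = l then 1 else 0)" using e0 by simp
  have dnz: "(of_nat d :: complex) \<noteq> 0" using d0 by simp
  have "(\<Sum>i<d. cnj (\<Phi>$(i*d+j)) * \<Phi>$(i*d+l)) = of_nat d * (\<Sum>i<d. cnj (\<Phi>$(i*d+j)) * \<Phi>$(i*d+l)) / of_nat d"
    using dnz by simp
  also have "\<dots> = (if j = l then 1 else 0) / of_nat d" unfolding e ..
  finally show ?thesis by simp
qed

definition phi_plus :: "nat \<Rightarrow> complex vec" where
  "phi_plus d = vec (d*d) (\<lambda>r. if r div d = r mod d then complex_of_real (1 / sqrt (real d)) else 0)"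

lemma index_phi_plus: "i < d \<Longrightarrow> j < d \<Longrightarrow> phi_plus d $ (i*d+j) = (if i = j then complex_of_real (1 / sqrt (real d)) else 0)"
  by (simp add: phi_plus_def pair_index_less)

lemma max_ent_phi_plus:
  assumes d0: "0 < d"
  shows "max_ent d (phi_plus d)"
proof -
  have dim: "dim_vec (phi_plus d) = d*d" by (simp add: phi_plus_def)
  have sq: "cmod (complex_of_real (1 / sqrt (real d))) ^ 2 = 1 / real d"
  proof -
    have "cmod (complex_of_real (1 / sqrt (real d))) = \<bar>1 / sqrt (real d)\<bar>" by (rule norm_of_real)
    then show ?thesis using d0 by (simp add: power_divide)
  qed
  have "(\<Sum>r<d*d. cmod (phi_plus d $ r) ^ 2) = (\<Sum>i<d. \<Sum>j<d. cmod (phi_plus d $ (i*d+j)) ^ 2)"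
    by (rule sum_lessThan_mult)
  also have "\<dots> = (\<Sum>i<d. \<Sum>j<d. if i = j then 1 / real d else 0)"
    using sq by (intro sum.cong refl) (auto simp: index_phi_plus)
  also have "\<dots> = 1" using d0 by (simp add: sum.delta)
  finally have u: "is_unit_vec (d*d) (phi_plus d)" unfolding is_unit_vec_def using dim by simp
  have pt: "ptrace_B d d (ket_bra (phi_plus d)) = (1 / of_nat d) \<cdot>\<^sub>m (1\<^sub>m d)"
  proof (rule eq_matI)
    fix i k assume "i < dim_row ((1 / of_nat d) \<cdot>\<^sub>m (1\<^sub>m d :: complex mat))" "k < dim_col ((1 / of_nat d) \<cdot>\<^sub>m (1\<^sub>m d :: complex mat))"
    then have ik: "i < d" "k < d" by auto
    have "ptrace_B d d (ket_bra (phi_plus d)) $$ (i,k) = (\<Sum>j<d. phi_plus d $ (i*d+j) * cnj (phi_plus d $ (k*d+j)))"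
      by (rule index_ptrace_B_ket_bra[OF dim ik])
    also have "\<dots> = (\<Sum>j<d. if j = i then (if i = k then 1 / of_nat d else 0) else 0)"
    proof (intro sum.cong refl)
      fix j assume "j \<in> {..<d}"
      then show "phi_plus d $ (i*d+j) * cnj (phi_plus d $ (k*d+j)) = (if j = i then (if i = k then 1 / of_nat d else 0) else 0)"
        using ik d0 by (auto simp: index_phi_plus of_real_mult[symmetric] simp del: of_real_mult)
    qed
    also have "\<dots> = ((1 / of_nat d) \<cdot>\<^sub>m (1\<^sub>m d)) $$ (i,k)" using ik by simp
    finally show "ptrace_B d d (ket_bra (phi_plus d)) $$ (i,k) = ((1 / of_nat d) \<cdot>\<^sub>m (1\<^sub>m d)) $$ (i,k)" .
  qed (auto simp: ptrace_B_def)
  show ?thesis unfolding max_ent_def using u pt by simp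
qed

lemma expect_le_singlet_fraction:
  assumes "max_ent d \<Phi>" and bound: "\<And>\<Phi>. max_ent d \<Phi> \<Longrightarrow> expect \<Phi> R \<le> c"
  shows "expect \<Phi> R \<le> singlet_fraction d R"
  unfolding singlet_fraction_def
proof (rule cSup_upper)
  show "expect \<Phi> R \<in> {expect \<Phi> R |\<Phi>. max_ent d \<Phi>}" using assms(1) by blast
  show "bdd_above {expect \<Phi> R |\<Phi>. max_ent d \<Phi>}"
    by (rule bdd_aboveI[of _ c]) (auto intro: bound)
qed

lemma singlet_fraction_le:
  assumes "0 < d" and bound: "\<And>\<Phi>. max_ent d \<Phi> \<Longrightarrow> expect \<Phi> R \<le> c"
  shows "singlet_fraction d R \<le> c"
  unfolding singlet_fraction_def
proof (rule cSup_least)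
  show "{expect \<Phi> R |\<Phi>. max_ent d \<Phi>} \<noteq> {}" using max_ent_phi_plus[OF assms(1)] by blast
  fix y assume "y \<in> {expect \<Phi> R |\<Phi>. max_ent d \<Phi>}"
  then show "y \<le> c" by (auto intro: bound)
qed

lemma apply_kraus_one: "R \<in> carrier_mat n n \<Longrightarrow> apply_kraus n [1\<^sub>m n] R = R"
  by (simp add: apply_kraus_def adj_one)

lemma LOCC_channel_one: "LOCC_channel d [1\<^sub>m (d*d)]"
proof -
  have "foldr (\<lambda>K S. adj K * K + S) (concat [[1\<^sub>m d]]) (0\<^sub>m d d) = (1\<^sub>m d :: complex mat)"
    by (simp add: adj_one)
  then have "LOCC_instr d d d d (map (map (\<lambda>K. kron K (1\<^sub>m d))) [[1\<^sub>m d]])"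
    by (intro LOCC_instr.alice) auto
  then show ?thesis
    unfolding LOCC_channel_def by (intro exI[of _ "[[kron (1\<^sub>m d) (1\<^sub>m d)]]"]) (simp add: kron_one_one)
qed

lemma singlet_fraction_le_max_singlet_fraction_LOCC:
  assumes "LOCC_channel d Ks"
    and bound: "\<And>Ks. LOCC_channel d Ks \<Longrightarrow> singlet_fraction d (apply_kraus (d*d) Ks R) \<le> c"
  shows "singlet_fraction d (apply_kraus (d*d) Ks R) \<le> max_singlet_fraction d R"
  unfolding max_singlet_fraction_def
proof (rule cSup_upper)
  show "singlet_fraction d (apply_kraus (d*d) Ks R)
      \<in> {singlet_fraction d (apply_kraus (d*d) Ks R) |Ks. LOCC_channel d Ks}"
    using assms(1) by blast
  show "bdd_above {singlet_fraction d (apply_kraus (d*d) Ks R) |Ks. LOCC_channel d Ks}"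
    by (rule bdd_aboveI[of _ c]) (auto intro: bound)
qed

lemma max_singlet_fraction_le:
  assumes bound: "\<And>Ks. LOCC_channel d Ks \<Longrightarrow> singlet_fraction d (apply_kraus (d*d) Ks R) \<le> c"
  shows "max_singlet_fraction d R \<le> c"
  unfolding max_singlet_fraction_def
proof (rule cSup_least)
  show "{singlet_fraction d (apply_kraus (d*d) Ks R) |Ks. LOCC_channel d Ks} \<noteq> {}"
    using LOCC_channel_one by blast
  fix y assume "y \<in> {singlet_fraction d (apply_kraus (d*d) Ks R) |Ks. LOCC_channel d Ks}"
  then show "y \<le> c" by (auto intro: bound)
qed

lemma LOCC_channel_carrier_complete:
  assumes "LOCC_channel d Ks"
  shows "\<forall>K\<in>set Ks. K \<in> carrier_mat (d*d) (d*d)" "kraus_complete (d*d) Ks"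
  using LOCC_channel_product_complete[OF assms] product_op_carrier by blast+

context
  fixes d :: nat and As :: "complex mat list" and \<psi> :: "complex vec"
  assumes d: "0 < d" and As: "\<forall>A\<in>set As. A \<in> carrier_mat d d" "kraus_complete d As"
    and \<psi>: "is_unit_vec (d*d) \<psi>"
begin

lemma singlet_fraction_LOCC_rho_out_le_1:
  assumes "LOCC_channel d Ks"
  shows "singlet_fraction d (apply_kraus (d*d) Ks (rho_out d As \<psi>)) \<le> 1"
proof (rule singlet_fraction_le[OF d])
  fix \<Phi> assume "max_ent d \<Phi>"
  then have "is_unit_vec (d*d) \<Phi>" by (simp add: max_ent_def)
  then show "expect \<Phi> (apply_kraus (d*d) Ks (rho_out d As \<psi>)) \<le> 1"
    by (rule expect_apply_kraus_rho_out_le_1[OF LOCC_channel_carrier_complete[OF assms] As \<psi>])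
qed

lemma apply_kraus_one_rho_out: "apply_kraus (d*d) [1\<^sub>m (d*d)] (rho_out d As \<psi>) = rho_out d As \<psi>"
  using \<psi> by (intro apply_kraus_one rho_out_carrier As(1)) (simp add: is_unit_vec_def)

lemma expect_le_singlet_fraction_rho_out:
  assumes "max_ent d \<Phi>"
  shows "expect \<Phi> (rho_out d As \<psi>) \<le> singlet_fraction d (rho_out d As \<psi>)"
proof (rule expect_le_singlet_fraction[OF assms])
  fix \<Phi>' assume "max_ent d \<Phi>'"
  then have "is_unit_vec (d*d) \<Phi>'" by (simp add: max_ent_def)
  then have "expect \<Phi>' (apply_kraus (d*d) [1\<^sub>m (d*d)] (rho_out d As \<psi>)) \<le> 1"
    by (rule expect_apply_kraus_rho_out_le_1[OF LOCC_channel_carrier_complete[OF LOCC_channel_one] As \<psi>])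
  then show "expect \<Phi>' (rho_out d As \<psi>) \<le> 1" by (simp only: apply_kraus_one_rho_out)
qed

lemma singlet_fraction_le_max_singlet_fraction:
  "singlet_fraction d (rho_out d As \<psi>) \<le> max_singlet_fraction d (rho_out d As \<psi>)"
  using singlet_fraction_le_max_singlet_fraction_LOCC[OF LOCC_channel_one singlet_fraction_LOCC_rho_out_le_1]
  by (simp only: apply_kraus_one_rho_out)

end

lemma max_singlet_fraction_le_channel:
  assumes "0 < d" "\<forall>A\<in>set As. A \<in> carrier_mat d d" "kraus_complete d As" "is_unit_vec (d*d) \<psi>"
  shows "max_singlet_fraction d (rho_out d As \<psi>) \<le> channel_singlet_fraction d As"
  unfolding channel_singlet_fraction_def
proof (rule cSup_upper)
  show "max_singlet_fraction d (rho_out d As \<psi>) \<in> {max_singlet_fraction d (rho_out d As \<psi>) |\<psi>. is_unit_vec (d*d) \<psi>}"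
    using assms(4) by blast
  show "bdd_above {max_singlet_fraction d (rho_out d As \<psi>) |\<psi>. is_unit_vec (d*d) \<psi>}"
  proof (rule bdd_aboveI[of _ 1])
    fix y assume "y \<in> {max_singlet_fraction d (rho_out d As \<psi>) |\<psi>. is_unit_vec (d*d) \<psi>}"
    then obtain \<psi>' where "y = max_singlet_fraction d (rho_out d As \<psi>')" "is_unit_vec (d*d) \<psi>'" by blast
    then show "y \<le> 1"
      using max_singlet_fraction_le[OF singlet_fraction_LOCC_rho_out_le_1[OF assms(1-3)]] by blast
  qed
qed

section \<open>The damping channel\<close>

lemma kraus_A_carrier: "kraus_A d x m \<in> carrier_mat d d"
  by (simp add: kraus_A_def)

lemma Omega_kraus_carrier: "\<forall>A\<in>set (Omega_kraus d x). A \<in> carrier_mat d d"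
  by (auto simp: Omega_kraus_def kraus_A_carrier)

lemma index_kraus_A_0: "j < d \<Longrightarrow> l < d \<Longrightarrow> kraus_A d x 0 $$ (j,l) = (if j = l then (if j = 0 then 1 else complex_of_real (x j)) else 0)"
  by (simp add: kraus_A_def)

lemma index_kraus_A: "m \<noteq> 0 \<Longrightarrow> j < d \<Longrightarrow> l < d \<Longrightarrow> kraus_A d x m $$ (j,l) = (if j = 0 \<and> l = m then complex_of_real (sqrt (1 - x m ^ 2)) else 0)"
  by (simp add: kraus_A_def)

lemma sum_list_map_upt: "sum_list (map f [0..<n]) = (\<Sum>m<n. f m)"
  by (induction n) auto

lemma sum_list_Omega_kraus: "sum_list (map f (Omega_kraus d x)) = (\<Sum>m<d. f (kraus_A d x m))"
  unfolding Omega_kraus_def by (simp add: sum_list_map_upt o_def)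

lemma gram_kraus_A_0:
  assumes "r < d" "c < d"
  shows "gram (kraus_A d x 0) r c = (if r = c then (if r = 0 then 1 else complex_of_real (x r ^ 2)) else 0)"
proof -
  have "gram (kraus_A d x 0) r c
      = (\<Sum>s<d. if s = r then (if r = c then (if r = 0 then 1 else complex_of_real (x r ^ 2)) else 0) else 0)"
    unfolding gram_def using assms
    by (intro sum.cong) (auto simp: kraus_A_def power2_eq_square)
  then show ?thesis using assms(1) by simp
qed

lemma gram_kraus_A:
  assumes "m \<noteq> 0" "r < d" "c < d" "x m ^ 2 \<le> 1"
  shows "gram (kraus_A d x m) r c = (if r = m \<and> c = m then complex_of_real (1 - x m ^ 2) else 0)"
proof -
  have sq: "complex_of_real (sqrt (1 - x m ^ 2)) * complex_of_real (sqrt (1 - x m ^ 2)) = complex_of_real (1 - x m ^ 2)"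
    using assms(4) by (simp flip: of_real_mult)
  have "gram (kraus_A d x m) r c
      = (\<Sum>s<d. if s = 0 then (if r = m \<and> c = m then complex_of_real (1 - x m ^ 2) else 0) else 0)"
    unfolding gram_def using assms sq
    by (intro sum.cong) (auto simp: kraus_A_def)
  then show ?thesis using assms(2) by simp
qed

lemma kraus_complete_Omega:
  assumes "\<forall>m\<in>{1..<d}. x m ^ 2 \<le> 1"
  shows "kraus_complete d (Omega_kraus d x)"
  unfolding kraus_complete_def
proof (intro allI impI)
  fix r c assume rc: "r < d" "c < d"
  have "(\<Sum>m\<in>{1..<d}. gram (kraus_A d x m) r c)
      = (\<Sum>m\<in>{1..<d}. if m = r then (if r = c then complex_of_real (1 - x r ^ 2) else 0) else 0)"
    using assms rc by (intro sum.cong) (auto simp: gram_kraus_A)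
  also have "\<dots> = (if r \<in> {1..<d} \<and> r = c then complex_of_real (1 - x r ^ 2) else 0)"
    by (simp add: sum.delta)
  finally have rest: "(\<Sum>m\<in>{1..<d}. gram (kraus_A d x m) r c)
      = (if r \<in> {1..<d} \<and> r = c then complex_of_real (1 - x r ^ 2) else 0)" .
  have "complex_of_real (x r ^ 2) + complex_of_real (1 - x r ^ 2) = 1"
    by (simp only: of_real_add[symmetric]) simp
  then have "gram (kraus_A d x 0) r c + (\<Sum>m\<in>{1..<d}. gram (kraus_A d x m) r c) = (if r = c then 1 else 0)"
    unfolding rest using rc by (auto simp: gram_kraus_A_0)
  then show "sum_list (map (\<lambda>K. gram K r c) (Omega_kraus d x)) = (if r = c then 1 else 0)"
    using rc by (simp add: sum_list_Omega_kraus sum_lessThan_split_first)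
qed

lemma vinner_kron_mult_kron_one_mult_vec:
  assumes A: "A \<in> carrier_mat d d" and B: "B \<in> carrier_mat d d" and Am: "Am \<in> carrier_mat d d"
    and dP': "dim_vec \<Phi>' = d*d" and dP: "dim_vec \<Phi> = d*d"
  shows "vinner \<Phi>' (kron A B *\<^sub>v (kron (1\<^sub>m d) Am *\<^sub>v \<Phi>)) =
    (\<Sum>j<d. \<Sum>l<d. Am$$(j,l) * (\<Sum>b<d. B$$(b,j) * (\<Sum>a<d. \<Sum>i<d. cnj (\<Phi>'$(a*d+b)) * A$$(a,i) * \<Phi>$(i*d+l))))"
proof -
  let ?w = "kron (1\<^sub>m d) Am *\<^sub>v \<Phi>"
  have dw: "dim_vec ?w = d*d" using dP Am by simp
  let ?X = "\<lambda>a b i j l. cnj (\<Phi>'$(a*d+b)) * (A$$(a,i) * B$$(b,j) * (Am$$(j,l) * \<Phi>$(i*d+l)))"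
  have "vinner \<Phi>' (kron A B *\<^sub>v ?w) = (\<Sum>r<d*d. cnj (\<Phi>'$r) * (kron A B *\<^sub>v ?w)$r)"
    unfolding vinner_def dP' ..
  also have "\<dots> = (\<Sum>a<d. \<Sum>b<d. cnj (\<Phi>'$(a*d+b)) * (kron A B *\<^sub>v ?w)$(a*d+b))"
    by (rule sum_lessThan_mult)
  also have "\<dots> = (\<Sum>a<d. \<Sum>b<d. \<Sum>i<d. \<Sum>j<d. \<Sum>l<d. ?X a b i j l)"
  proof (intro sum.cong refl)
    fix a b assume ab: "a \<in> {..<d}" "b \<in> {..<d}"
    have "(kron A B *\<^sub>v ?w)$(a*d+b) = (\<Sum>i<d. \<Sum>j<d. A$$(a,i) * B$$(b,j) * ?w$(i*d+j))"
      using index_kron_mult_vec[OF A B dw] ab by auto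
    also have "\<dots> = (\<Sum>i<d. \<Sum>j<d. A$$(a,i) * B$$(b,j) * (\<Sum>l<d. Am$$(j,l) * \<Phi>$(i*d+l)))"
      using index_kron_one_mult_vec[OF Am dP] by (intro sum.cong refl) auto
    finally show "cnj (\<Phi>'$(a*d+b)) * (kron A B *\<^sub>v ?w)$(a*d+b) = (\<Sum>i<d. \<Sum>j<d. \<Sum>l<d. ?X a b i j l)"
      by (simp add: sum_distrib_left)
  qed
  also have "\<dots> = (\<Sum>a<d. \<Sum>b<d. \<Sum>j<d. \<Sum>i<d. \<Sum>l<d. ?X a b i j l)"
    by (rule sum.cong[OF refl], rule sum.cong[OF refl], rule sum.swap)
  also have "\<dots> = (\<Sum>a<d. \<Sum>b<d. \<Sum>j<d. \<Sum>l<d. \<Sum>i<d. ?X a b i j l)"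
    by (rule sum.cong[OF refl], rule sum.cong[OF refl], rule sum.cong[OF refl], rule sum.swap)
  also have "\<dots> = (\<Sum>a<d. \<Sum>j<d. \<Sum>b<d. \<Sum>l<d. \<Sum>i<d. ?X a b i j l)"
    by (rule sum.cong[OF refl], rule sum.swap)
  also have "\<dots> = (\<Sum>a<d. \<Sum>j<d. \<Sum>l<d. \<Sum>b<d. \<Sum>i<d. ?X a b i j l)"
    by (rule sum.cong[OF refl], rule sum.cong[OF refl], rule sum.swap)
  also have "\<dots> = (\<Sum>j<d. \<Sum>a<d. \<Sum>l<d. \<Sum>b<d. \<Sum>i<d. ?X a b i j l)"
    by (rule sum.swap)
  also have "\<dots> = (\<Sum>j<d. \<Sum>l<d. \<Sum>a<d. \<Sum>b<d. \<Sum>i<d. ?X a b i j l)"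
    by (rule sum.cong[OF refl], rule sum.swap)
  also have "\<dots> = (\<Sum>j<d. \<Sum>l<d. \<Sum>b<d. \<Sum>a<d. \<Sum>i<d. ?X a b i j l)"
    by (rule sum.cong[OF refl], rule sum.cong[OF refl], rule sum.swap)
  also have "\<dots> = (\<Sum>j<d. \<Sum>l<d. Am$$(j,l) * (\<Sum>b<d. B$$(b,j) * (\<Sum>a<d. \<Sum>i<d. cnj (\<Phi>'$(a*d+b)) * A$$(a,i) * \<Phi>$(i*d+l))))"
    by (simp add: sum_distrib_left ac_simps)
  finally show ?thesis .
qed

lemma sum_kraus_A_0_mult:
  assumes d0: "0 < d"
  shows "(\<Sum>j<d. \<Sum>l<d. kraus_A d x 0 $$ (j,l) * H j l) = H 0 0 + (\<Sum>m\<in>{1..<d}. complex_of_real (x m) * H m m)"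
proof -
  have "(\<Sum>j<d. \<Sum>l<d. kraus_A d x 0 $$ (j,l) * H j l) = (\<Sum>j<d. (if j = 0 then 1 else complex_of_real (x j)) * H j j)"
  proof (rule sum.cong[OF refl])
    fix j assume j: "j \<in> {..<d}"
    have "(\<Sum>l<d. kraus_A d x 0 $$ (j,l) * H j l) = (\<Sum>l<d. if j = l then (if j = 0 then 1 else complex_of_real (x j)) * H j l else 0)"
      using j by (intro sum.cong refl) (auto simp: index_kraus_A_0)
    also have "\<dots> = (if j = 0 then 1 else complex_of_real (x j)) * H j j" using j by (simp add: sum.delta)
    finally show "(\<Sum>l<d. kraus_A d x 0 $$ (j,l) * H j l) = (if j = 0 then 1 else complex_of_real (x j)) * H j j" .
  qed
  also have "\<dots> = H 0 0 + (\<Sum>m\<in>{1..<d}. complex_of_real (x m) * H m m)"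
    using d0 by (subst sum_lessThan_split_first) auto
  finally show ?thesis .
qed

lemma sum_kraus_A_mult:
  assumes m: "m \<in> {1..<d}"
  shows "(\<Sum>j<d. \<Sum>l<d. kraus_A d x m $$ (j,l) * H j l) = complex_of_real (sqrt (1 - x m ^ 2)) * H 0 m"
proof -
  have m0: "m \<noteq> 0" "m < d" using m by auto
  have "(\<Sum>j<d. \<Sum>l<d. kraus_A d x m $$ (j,l) * H j l) = (\<Sum>j<d. if j = 0 then complex_of_real (sqrt (1 - x m ^ 2)) * H 0 m else 0)"
  proof (rule sum.cong[OF refl])
    fix j assume j: "j \<in> {..<d}"
    have "(\<Sum>l<d. kraus_A d x m $$ (j,l) * H j l) = (\<Sum>l<d. if l = m then (if j = 0 then complex_of_real (sqrt (1 - x m ^ 2)) * H j l else 0) else 0)"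
      using j m0 by (intro sum.cong refl) (auto simp: index_kraus_A)
    also have "\<dots> = (if j = 0 then complex_of_real (sqrt (1 - x m ^ 2)) * H 0 m else 0)" using m0 by (simp add: sum.delta')
    finally show "(\<Sum>l<d. kraus_A d x m $$ (j,l) * H j l) = (if j = 0 then complex_of_real (sqrt (1 - x m ^ 2)) * H 0 m else 0)" .
  qed
  also have "\<dots> = complex_of_real (sqrt (1 - x m ^ 2)) * H 0 m" using m0 by (simp add: sum.delta')
  finally show ?thesis .
qed

lemma sum_cmod_vinner_Omega_sq:
  assumes A: "A \<in> carrier_mat d d" and B: "B \<in> carrier_mat d d" and d0: "0 < d"
    and dP': "dim_vec \<Phi>' = d*d" and dP: "dim_vec \<Phi> = d*d"
    and xr: "\<forall>m\<in>{1..<d}. 0 < x m \<and> x m < 1"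
  defines "H \<equiv> \<lambda>j l. (\<Sum>b<d. B$$(b,j) * (\<Sum>a<d. \<Sum>i<d. cnj (\<Phi>'$(a*d+b)) * A$$(a,i) * \<Phi>$(i*d+l)))"
  shows "(\<Sum>m<d. cmod (vinner \<Phi>' (kron A B *\<^sub>v (kron (1\<^sub>m d) (kraus_A d x m) *\<^sub>v \<Phi>))) ^ 2)
     = cmod (H 0 0 + (\<Sum>m\<in>{1..<d}. complex_of_real (x m) * H m m)) ^ 2 + (\<Sum>m\<in>{1..<d}. (1 - x m ^ 2) * cmod (H 0 m) ^ 2)"
proof -
  have ipf: "vinner \<Phi>' (kron A B *\<^sub>v (kron (1\<^sub>m d) (kraus_A d x m) *\<^sub>v \<Phi>)) = (\<Sum>j<d. \<Sum>l<d. kraus_A d x m $$ (j,l) * H j l)" for m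
    unfolding H_def by (rule vinner_kron_mult_kron_one_mult_vec[OF A B kraus_A_carrier dP' dP])
  have "(\<Sum>m<d. cmod (vinner \<Phi>' (kron A B *\<^sub>v (kron (1\<^sub>m d) (kraus_A d x m) *\<^sub>v \<Phi>))) ^ 2)
     = cmod (vinner \<Phi>' (kron A B *\<^sub>v (kron (1\<^sub>m d) (kraus_A d x 0) *\<^sub>v \<Phi>))) ^ 2
       + (\<Sum>m\<in>{1..<d}. cmod (vinner \<Phi>' (kron A B *\<^sub>v (kron (1\<^sub>m d) (kraus_A d x m) *\<^sub>v \<Phi>))) ^ 2)"
    by (rule sum_lessThan_split_first[OF d0])
  also have "cmod (vinner \<Phi>' (kron A B *\<^sub>v (kron (1\<^sub>m d) (kraus_A d x 0) *\<^sub>v \<Phi>))) ^ 2 = cmod (H 0 0 + (\<Sum>m\<in>{1..<d}. complex_of_real (x m) * H m m)) ^ 2"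
    unfolding ipf sum_kraus_A_0_mult[OF d0] ..
  also have "(\<Sum>m\<in>{1..<d}. cmod (vinner \<Phi>' (kron A B *\<^sub>v (kron (1\<^sub>m d) (kraus_A d x m) *\<^sub>v \<Phi>))) ^ 2) = (\<Sum>m\<in>{1..<d}. (1 - x m ^ 2) * cmod (H 0 m) ^ 2)"
  proof (rule sum.cong[OF refl])
    fix m assume m: "m \<in> {1..<d}"
    have "0 < x m" "x m < 1" using xr m by auto
    then have "x m ^ 2 \<le> 1" by (intro power_le_one) auto
    then have xm: "0 \<le> 1 - x m ^ 2" by simp
    have "cmod (vinner \<Phi>' (kron A B *\<^sub>v (kron (1\<^sub>m d) (kraus_A d x m) *\<^sub>v \<Phi>))) ^ 2 = cmod (complex_of_real (sqrt (1 - x m ^ 2)) * H 0 m) ^ 2"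
      unfolding ipf sum_kraus_A_mult[OF m] ..
    also have "\<dots> = (1 - x m ^ 2) * cmod (H 0 m) ^ 2"
      using xm by (simp add: norm_mult power_mult_distrib)
    finally show "cmod (vinner \<Phi>' (kron A B *\<^sub>v (kron (1\<^sub>m d) (kraus_A d x m) *\<^sub>v \<Phi>))) ^ 2 = (1 - x m ^ 2) * cmod (H 0 m) ^ 2" .
  qed
  finally show ?thesis .
qed

section \<open>Product-complete families\<close>

lemma sum_cnj_mult_eq_sum_cmod_sq: "(\<Sum>b\<in>S. cnj (f b) * f b) = complex_of_real (\<Sum>b\<in>S. cmod (f b) ^ 2)"
proof -
  have "(\<Sum>b\<in>S. cnj (f b) * f b) = (\<Sum>b\<in>S. f b * cnj (f b))" by (simp add: mult.commute)
  also have "\<dots> = complex_of_real (\<Sum>b\<in>S. cmod (f b) ^ 2)" by (rule sum_cmod_sq_eq_sum_mult_cnj[symmetric])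
  finally show ?thesis .
qed

lemma sum_add_sum_sum_swap:
  fixes a :: "'k \<Rightarrow> real"
  shows "(\<Sum>k\<in>K. a k + (\<Sum>m\<in>I. b k m) + (\<Sum>m\<in>I. c k m))
    = (\<Sum>k\<in>K. a k) + (\<Sum>m\<in>I. (\<Sum>k\<in>K. b k m) + (\<Sum>k\<in>K. c k m))"
proof -
  have "(\<Sum>k\<in>K. a k + (\<Sum>m\<in>I. b k m) + (\<Sum>m\<in>I. c k m)) = (\<Sum>k\<in>K. a k) + (\<Sum>k\<in>K. \<Sum>m\<in>I. b k m) + (\<Sum>k\<in>K. \<Sum>m\<in>I. c k m)"
    by (simp only: sum.distrib)
  also have "(\<Sum>k\<in>K. \<Sum>m\<in>I. b k m) = (\<Sum>m\<in>I. \<Sum>k\<in>K. b k m)" by (rule sum.swap)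
  also have "(\<Sum>k\<in>K. \<Sum>m\<in>I. c k m) = (\<Sum>m\<in>I. \<Sum>k\<in>K. c k m)" by (rule sum.swap)
  finally show ?thesis by (simp only: sum.distrib add.assoc)
qed

locale product_complete =
  fixes L d :: nat and A B :: "nat \<Rightarrow> nat \<Rightarrow> nat \<Rightarrow> complex"
  assumes complete: "\<And>l l' j j'. l < d \<Longrightarrow> l' < d \<Longrightarrow> j < d \<Longrightarrow> j' < d \<Longrightarrow>
    (\<Sum>k<L. (\<Sum>b<d. cnj (A k b l) * A k b l') * (\<Sum>b<d. cnj (B k b j) * B k b j'))
      = (if l = l' \<and> j = j' then 1 else 0)"
begin

definition G :: "nat \<Rightarrow> nat \<Rightarrow> nat \<Rightarrow> complex" where
  "G k j l = (\<Sum>b<d. B k b j * A k b l)"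

definition overlap :: "nat \<Rightarrow> complex" where
  "overlap m = (\<Sum>k<L. cnj (G k 0 0) * G k m m)"

lemma sum_norm_products_eq_1:
  assumes "l < d" "j < d"
  shows "(\<Sum>k<L. (\<Sum>b<d. cmod (A k b l) ^ 2) * (\<Sum>b<d. cmod (B k b j) ^ 2)) = 1"
proof -
  have "complex_of_real (\<Sum>k<L. (\<Sum>b<d. cmod (A k b l) ^ 2) * (\<Sum>b<d. cmod (B k b j) ^ 2))
     = (\<Sum>k<L. (\<Sum>b<d. cnj (A k b l) * A k b l) * (\<Sum>b<d. cnj (B k b j) * B k b j))"
    by (simp add: sum_cnj_mult_eq_sum_cmod_sq)
  also have "\<dots> = 1" using complete[of l l j j] assms by simp
  finally show ?thesis by (simp only: of_real_eq_1_iff)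
qed

lemma sum_cmod_sq_G_diag_le:
  assumes j: "j < d"
  shows "(\<Sum>k<L. cmod (G k j j) ^ 2) \<le> 1"
proof -
  have "(\<Sum>k<L. cmod (G k j j) ^ 2) \<le> (\<Sum>k<L. (\<Sum>b<d. cmod (A k b j) ^ 2) * (\<Sum>b<d. cmod (cnj (B k b j)) ^ 2))"
  proof (rule sum_mono)
    fix k
    have "G k j j = (\<Sum>b<d. A k b j * cnj (cnj (B k b j)))" by (simp add: G_def mult.commute)
    then show "cmod (G k j j) ^ 2 \<le> (\<Sum>b<d. cmod (A k b j) ^ 2) * (\<Sum>b<d. cmod (cnj (B k b j)) ^ 2)"
      using cmod_sum_mult_cnj_sq_le[of "{..<d}" "\<lambda>b. A k b j" "\<lambda>b. cnj (B k b j)"] by simp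
  qed
  also have "\<dots> = 1" using sum_norm_products_eq_1[OF j j] by simp
  finally show ?thesis .
qed

text \<open>The off-diagonal entries G k 0 m are controlled by comparing the rank-two array Y with its
  transpose.\<close>
definition Y :: "nat \<Rightarrow> nat \<Rightarrow> nat \<Rightarrow> nat \<Rightarrow> complex" where
  "Y m k a b = A k a m * cnj (B k b 0) + overlap m * A k a 0 * cnj (B k b m)"

lemma sum_Y_mult_cnj_transpose:
  "(\<Sum>k<L. \<Sum>a<d. \<Sum>b<d. Y m k a b * cnj (Y m k b a))
    = complex_of_real ((\<Sum>k<L. cmod (G k 0 m) ^ 2) + 2 * cmod (overlap m) ^ 2
        + cmod (overlap m) ^ 2 * (\<Sum>k<L. cmod (G k m 0) ^ 2))"
proof -
  let ?g = "overlap m"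
  define P where "P k a = A k a m" for k a
  define Q where "Q k b = cnj (B k b 0)" for k b
  define R where "R k a = ?g * A k a 0" for k a
  define S where "S k b = cnj (B k b m)" for k b
  have Y_eq: "Y m k a b = P k a * Q k b + R k a * S k b" for k a b
    by (simp add: Y_def P_def Q_def R_def S_def)
  have Lk: "(\<Sum>a<d. \<Sum>b<d. Y m k a b * cnj (Y m k b a)) = G k 0 m * cnj (G k 0 m)
      + cnj ?g * (G k m m * cnj (G k 0 0)) + ?g * (G k 0 0 * cnj (G k m m)) + (?g * G k m 0) * cnj (?g * G k m 0)" for k
  proof -
    have e1: "(\<Sum>a<d. P k a * cnj (Q k a)) = G k 0 m" by (simp add: P_def Q_def G_def mult.commute)
    have e2: "(\<Sum>b<d. Q k b * cnj (P k b)) = cnj (G k 0 m)" by (simp add: P_def Q_def G_def mult.commute)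
    have e3: "(\<Sum>a<d. P k a * cnj (S k a)) = G k m m" by (simp add: P_def S_def G_def mult.commute)
    have e4: "(\<Sum>b<d. Q k b * cnj (R k b)) = cnj ?g * cnj (G k 0 0)" by (simp add: Q_def R_def G_def sum_distrib_left ac_simps)
    have e5: "(\<Sum>a<d. R k a * cnj (Q k a)) = ?g * G k 0 0" by (simp add: Q_def R_def G_def sum_distrib_left ac_simps)
    have e6: "(\<Sum>b<d. S k b * cnj (P k b)) = cnj (G k m m)" by (simp add: P_def S_def G_def mult.commute)
    have e7: "(\<Sum>a<d. R k a * cnj (S k a)) = ?g * G k m 0" by (simp add: R_def S_def G_def sum_distrib_left ac_simps)
    have e8: "(\<Sum>b<d. S k b * cnj (R k b)) = cnj (?g * G k m 0)" by (simp add: R_def S_def G_def sum_distrib_left ac_simps)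
    show ?thesis
      unfolding Y_eq sum_sum_mult_cnj_transpose_rank_two e1 e2 e3 e4 e5 e6 e7 e8 by (simp add: ac_simps)
  qed
  have s2: "(\<Sum>k<L. G k m m * cnj (G k 0 0)) = ?g" by (simp add: overlap_def mult.commute)
  have s3: "(\<Sum>k<L. G k 0 0 * cnj (G k m m)) = cnj ?g" by (simp add: overlap_def mult.commute)
  have "(\<Sum>k<L. \<Sum>a<d. \<Sum>b<d. Y m k a b * cnj (Y m k b a))
      = (\<Sum>k<L. G k 0 m * cnj (G k 0 m)) + cnj ?g * (\<Sum>k<L. G k m m * cnj (G k 0 0))
        + ?g * (\<Sum>k<L. G k 0 0 * cnj (G k m m)) + (?g * cnj ?g) * (\<Sum>k<L. G k m 0 * cnj (G k m 0))"
    unfolding Lk by (simp add: sum.distrib sum_distrib_left ac_simps)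
  also have "\<dots> = complex_of_real ((\<Sum>k<L. cmod (G k 0 m) ^ 2) + 2 * cmod ?g ^ 2 + cmod ?g ^ 2 * (\<Sum>k<L. cmod (G k m 0) ^ 2))"
    unfolding s2 s3 by (simp add: sum_cmod_sq_eq_sum_mult_cnj[symmetric] complex_norm_square[symmetric] ac_simps)
  finally show ?thesis .
qed

lemma sum_cmod_sq_Y:
  assumes m: "m \<in> {1..<d}"
  shows "(\<Sum>k<L. \<Sum>a<d. \<Sum>b<d. cmod (Y m k a b) ^ 2) = 1 + cmod (overlap m) ^ 2"
proof -
  have md: "m < d" "m \<noteq> 0" and d0: "0 < d" using m by auto
  let ?g = "overlap m"
  define P where "P k a = A k a m" for k a
  define Q where "Q k b = cnj (B k b 0)" for k b
  define R where "R k a = ?g * A k a 0" for k a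
  define S where "S k b = cnj (B k b m)" for k b
  have Y_eq: "Y m k a b = P k a * Q k b + R k a * S k b" for k a b
    by (simp add: Y_def P_def Q_def R_def S_def)
  have Rk: "(\<Sum>a<d. \<Sum>b<d. cmod (Y m k a b) ^ 2) = (\<Sum>a<d. cmod (A k a m) ^ 2) * (\<Sum>b<d. cmod (B k b 0) ^ 2)
      + cmod ?g ^ 2 * ((\<Sum>a<d. cmod (A k a 0) ^ 2) * (\<Sum>b<d. cmod (B k b m) ^ 2))
      + 2 * Re (cnj ?g * ((\<Sum>a<d. cnj (A k a 0) * A k a m) * (\<Sum>b<d. cnj (B k b 0) * B k b m)))" for k
  proof -
    have r1: "(\<Sum>a<d. cmod (R k a) ^ 2) = cmod ?g ^ 2 * (\<Sum>a<d. cmod (A k a 0) ^ 2)"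
      by (simp add: R_def norm_mult power_mult_distrib sum_distrib_left)
    have "(\<Sum>a<d. P k a * cnj (R k a)) = cnj ?g * (\<Sum>a<d. cnj (A k a 0) * A k a m)"
      by (simp add: P_def R_def sum_distrib_left ac_simps)
    moreover have "(\<Sum>b<d. Q k b * cnj (S k b)) = (\<Sum>b<d. cnj (B k b 0) * B k b m)"
      by (simp add: Q_def S_def)
    ultimately have r2: "(\<Sum>a<d. P k a * cnj (R k a)) * (\<Sum>b<d. Q k b * cnj (S k b)) =
        cnj ?g * ((\<Sum>a<d. cnj (A k a 0) * A k a m) * (\<Sum>b<d. cnj (B k b 0) * B k b m))"
      by simp
    show ?thesis unfolding Y_eq sum_sum_cmod_sq_rank_two[OF finite_lessThan] r1 r2
      by (simp add: P_def Q_def S_def ac_simps)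
  qed
  have orth: "(\<Sum>k<L. (\<Sum>a<d. cnj (A k a 0) * A k a m) * (\<Sum>b<d. cnj (B k b 0) * B k b m)) = 0"
    using complete[of 0 m 0 m] md by simp
  have "(\<Sum>k<L. \<Sum>a<d. \<Sum>b<d. cmod (Y m k a b) ^ 2)
      = (\<Sum>k<L. (\<Sum>a<d. cmod (A k a m) ^ 2) * (\<Sum>b<d. cmod (B k b 0) ^ 2))
        + cmod ?g ^ 2 * (\<Sum>k<L. (\<Sum>a<d. cmod (A k a 0) ^ 2) * (\<Sum>b<d. cmod (B k b m) ^ 2))
        + 2 * Re (cnj ?g * (\<Sum>k<L. (\<Sum>a<d. cnj (A k a 0) * A k a m) * (\<Sum>b<d. cnj (B k b 0) * B k b m)))"
    unfolding Rk by (simp add: sum.distrib sum_distrib_left Re_sum)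
  also have "\<dots> = 1 + cmod ?g ^ 2"
    unfolding orth using sum_norm_products_eq_1[of m 0] sum_norm_products_eq_1[of 0 m] md d0 by simp
  finally show ?thesis .
qed

lemma sum_cmod_sq_G_le:
  assumes "m \<in> {1..<d}"
  shows "(\<Sum>k<L. cmod (G k 0 m) ^ 2) \<le> 1 - cmod (overlap m) ^ 2"
proof -
  have "Re (\<Sum>k<L. \<Sum>a<d. \<Sum>b<d. Y m k a b * cnj (Y m k b a))
      = (\<Sum>k<L. Re (\<Sum>a<d. \<Sum>b<d. Y m k a b * cnj (Y m k b a)))"
    by (rule Re_sum)
  also have "\<dots> \<le> (\<Sum>k<L. \<Sum>a<d. \<Sum>b<d. cmod (Y m k a b) ^ 2)"
    by (intro sum_mono Re_sum_mult_cnj_transpose_le finite_lessThan)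
  finally have "(\<Sum>k<L. cmod (G k 0 m) ^ 2) + 2 * cmod (overlap m) ^ 2
      + cmod (overlap m) ^ 2 * (\<Sum>k<L. cmod (G k m 0) ^ 2) \<le> 1 + cmod (overlap m) ^ 2"
    unfolding sum_Y_mult_cnj_transpose sum_cmod_sq_Y[OF assms] by simp
  moreover have "0 \<le> cmod (overlap m) ^ 2 * (\<Sum>k<L. cmod (G k m 0) ^ 2)" by (simp add: sum_nonneg)
  ultimately show ?thesis by linarith
qed

lemma cmod_overlap_le_1:
  assumes "m \<in> {1..<d}"
  shows "cmod (overlap m) \<le> 1"
proof -
  have "cmod (overlap m) ^ 2 \<le> 1"
    using sum_cmod_sq_G_le[OF assms] sum_nonneg[of "{..<L}" "\<lambda>k. cmod (G k 0 m) ^ 2"] by simp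
  then show ?thesis by (simp add: power_le_one_iff)
qed

lemma damped_term_le:
  assumes m: "m \<in> {1..<d}" and x: "0 < x" "x < 1"
  shows "real (d - 1) * x ^ 2 * (\<Sum>k<L. cmod (G k m m) ^ 2) + 2 * x * Re (\<Sum>k<L. G k 0 0 * cnj (G k m m))
      + (1 - x ^ 2) * (\<Sum>k<L. cmod (G k 0 m) ^ 2) \<le> 1 + real d * x ^ 2 - x ^ 2 * (1 - x) ^ 2 / 4"
proof -
  have md: "m < d" using m by simp
  have nd: "real d = real (d - 1) + 1" using m by auto
  have a1: "real (d - 1) * x ^ 2 * (\<Sum>k<L. cmod (G k m m) ^ 2) \<le> real (d - 1) * x ^ 2"
    using sum_cmod_sq_G_diag_le[OF md] by (simp add: mult_left_le)
  have "(\<Sum>k<L. G k 0 0 * cnj (G k m m)) = cnj (overlap m)" by (simp add: overlap_def mult.commute)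
  then have "Re (\<Sum>k<L. G k 0 0 * cnj (G k m m)) \<le> cmod (overlap m)"
    using complex_Re_le_cmod[of "cnj (overlap m)"] by simp
  then have a2: "2 * x * Re (\<Sum>k<L. G k 0 0 * cnj (G k m m)) \<le> 2 * x * cmod (overlap m)"
    using x by (intro mult_left_mono) auto
  have "x ^ 2 \<le> 1" using x by (simp add: power_le_one)
  then have a3: "(1 - x ^ 2) * (\<Sum>k<L. cmod (G k 0 m) ^ 2) \<le> (1 - x ^ 2) * (1 - cmod (overlap m) ^ 2)"
    using sum_cmod_sq_G_le[OF m] by (intro mult_left_mono) auto
  have a4: "real (d - 1) * x ^ 2 + 2 * x * cmod (overlap m) + (1 - x ^ 2) * (1 - cmod (overlap m) ^ 2)
      \<le> 1 + real d * x ^ 2 - x ^ 2 * (1 - x) ^ 2 / 4"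
    using quadratic_gap_ineq[OF x norm_ge_zero cmod_overlap_le_1[OF m], of "real (d - 1)"]
    unfolding nd by (simp add: ac_simps)
  show ?thesis using a1 a2 a3 a4 by linarith
qed

lemma damped_sum_le:
  assumes d2: "2 \<le> d" and xr: "\<forall>m\<in>{1..<d}. 0 < x m \<and> x m < 1"
  shows "(\<Sum>k<L. cmod (G k 0 0 + (\<Sum>m\<in>{1..<d}. complex_of_real (x m) * G k m m)) ^ 2
      + (\<Sum>m\<in>{1..<d}. (1 - x m ^ 2) * cmod (G k 0 m) ^ 2))
    \<le> real d * (1 + (\<Sum>m\<in>{1..<d}. x m ^ 2)) - (\<Sum>m\<in>{1..<d}. x m ^ 2 * (1 - x m) ^ 2 / 4)"
proof -
  define I where "I = {1..<d}"
  define n where "n = real (d - 1)"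
  have nd: "real d = n + 1" using d2 unfolding n_def by auto
  have cardIn: "real (card I) = n" unfolding I_def n_def by simp
  have I: "finite I" "I \<noteq> {}" using d2 unfolding I_def by auto
  have weighted: "cmod (G k 0 0 + (\<Sum>m\<in>I. complex_of_real (x m) * G k m m)) ^ 2 \<le>
      cmod (G k 0 0) ^ 2 + (\<Sum>m\<in>I. n * x m ^ 2 * cmod (G k m m) ^ 2 + 2 * x m * Re (G k 0 0 * cnj (G k m m)))" for k
    using cmod_add_weighted_sum_sq_le[OF I, where u = "G k 0 0" and z = "\<lambda>m. G k m m" and w = x]
    unfolding cardIn .
  have "(\<Sum>k<L. cmod (G k 0 0 + (\<Sum>m\<in>I. complex_of_real (x m) * G k m m)) ^ 2 + (\<Sum>m\<in>I. (1 - x m ^ 2) * cmod (G k 0 m) ^ 2))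
     \<le> (\<Sum>k<L. cmod (G k 0 0) ^ 2 + (\<Sum>m\<in>I. n * x m ^ 2 * cmod (G k m m) ^ 2 + 2 * x m * Re (G k 0 0 * cnj (G k m m))) + (\<Sum>m\<in>I. (1 - x m ^ 2) * cmod (G k 0 m) ^ 2))"
    by (intro sum_mono add_right_mono weighted)
  also have "\<dots> = (\<Sum>k<L. cmod (G k 0 0) ^ 2) + (\<Sum>m\<in>I. n * x m ^ 2 * (\<Sum>k<L. cmod (G k m m) ^ 2) + 2 * x m * Re (\<Sum>k<L. G k 0 0 * cnj (G k m m))
        + (1 - x m ^ 2) * (\<Sum>k<L. cmod (G k 0 m) ^ 2))"
    unfolding sum_add_sum_sum_swap by (simp add: sum.distrib sum_distrib_left[symmetric] Re_sum[symmetric] mult.assoc)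
  also have "\<dots> \<le> 1 + (\<Sum>m\<in>I. 1 + real d * x m ^ 2 - x m ^ 2 * (1 - x m) ^ 2 / 4)"
  proof (rule add_mono)
    show "(\<Sum>k<L. cmod (G k 0 0) ^ 2) \<le> 1" using sum_cmod_sq_G_diag_le[of 0] d2 by simp
    show "(\<Sum>m\<in>I. n * x m ^ 2 * (\<Sum>k<L. cmod (G k m m) ^ 2) + 2 * x m * Re (\<Sum>k<L. G k 0 0 * cnj (G k m m))
        + (1 - x m ^ 2) * (\<Sum>k<L. cmod (G k 0 m) ^ 2)) \<le> (\<Sum>m\<in>I. 1 + real d * x m ^ 2 - x m ^ 2 * (1 - x m) ^ 2 / 4)"
      using xr unfolding I_def n_def by (intro sum_mono damped_term_le) auto
  qed
  also have "\<dots> = real d * (1 + (\<Sum>m\<in>I. x m ^ 2)) - (\<Sum>m\<in>I. x m ^ 2 * (1 - x m) ^ 2 / 4)"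
    using cardIn nd by (simp add: sum.distrib sum_subtractf sum_distrib_left algebra_simps)
  finally show ?thesis unfolding I_def .
qed

end

section \<open>Fidelity bounds\<close>

lemma max_ent_pos: "max_ent d \<Phi> \<Longrightarrow> 0 < d"
  by (cases d) (auto simp: max_ent_def is_unit_vec_def)

lemma sum_cnj_mult_conj_max_ent:
  fixes F :: "nat \<Rightarrow> nat \<Rightarrow> complex" and \<Phi> \<Phi>' :: "complex vec"
  assumes me': "max_ent d \<Phi>'"
  defines "C \<equiv> \<lambda>b l. of_nat d * (\<Sum>a<d. cnj (\<Phi>' $ (a*d+b)) * (\<Sum>i<d. F a i * \<Phi> $ (i*d+l)))"
  shows "(\<Sum>b<d. cnj (C b l) * C b l')
    = of_nat d * (\<Sum>i<d. \<Sum>i'<d. cnj (\<Phi> $ (i*d+l)) * \<Phi> $ (i'*d+l') * (\<Sum>a<d. cnj (F a i) * F a i'))"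
proof -
  have dd: "complex_of_nat d \<noteq> 0" using max_ent_pos[OF me'] by simp
  have rowP': "\<forall>a<d. \<forall>a'<d. (\<Sum>b<d. \<Phi>' $ (a*d+b) * cnj (\<Phi>' $ (a'*d+b))) = (if a = a' then 1 / of_nat d else 0)"
    using max_ent_row_inner[OF me'] by blast
  define Cm where "Cm a l = (\<Sum>i<d. F a i * \<Phi> $ (i*d+l))" for a l
  have "(\<Sum>b<d. cnj (C b l) * C b l')
      = of_nat d * of_nat d * (\<Sum>b<d. \<Sum>a<d. \<Sum>a'<d. (\<Phi>' $ (a*d+b) * cnj (\<Phi>' $ (a'*d+b))) * (cnj (Cm a l) * Cm a' l'))"
    unfolding C_def Cm_def[symmetric] by (simp add: sum_product sum_distrib_left ac_simps)
  also have "(\<Sum>b<d. \<Sum>a<d. \<Sum>a'<d. (\<Phi>' $ (a*d+b) * cnj (\<Phi>' $ (a'*d+b))) * (cnj (Cm a l) * Cm a' l'))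
      = (\<Sum>a<d. \<Sum>a'<d. \<Sum>b<d. (\<Phi>' $ (a*d+b) * cnj (\<Phi>' $ (a'*d+b))) * (cnj (Cm a l) * Cm a' l'))"
    by (subst sum.swap, rule sum.cong[OF refl], rule sum.swap)
  also have "\<dots> = (\<Sum>a<d. \<Sum>a'<d. (if a = a' then 1 / of_nat d else 0) * (cnj (Cm a l) * Cm a' l'))"
    using rowP' by (simp add: sum_distrib_right[symmetric])
  also have "\<dots> = (\<Sum>a<d. 1 / of_nat d * (cnj (Cm a l) * Cm a l'))"
  proof (rule sum.cong[OF refl])
    fix a assume a: "a \<in> {..<d}"
    have "(\<Sum>a'<d. (if a = a' then 1 / of_nat d else 0) * (cnj (Cm a l) * Cm a' l'))
        = (\<Sum>a'<d. if a = a' then 1 / of_nat d * (cnj (Cm a l) * Cm a' l') else 0)"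
      by (intro sum.cong) auto
    then show "(\<Sum>a'<d. (if a = a' then 1 / of_nat d else 0) * (cnj (Cm a l) * Cm a' l'))
        = 1 / of_nat d * (cnj (Cm a l) * Cm a l')"
      using a by (simp add: sum.delta)
  qed
  also have "\<dots> = 1 / of_nat d * (\<Sum>a<d. cnj (Cm a l) * Cm a l')"
    by (simp only: sum_distrib_left)
  also have "(\<Sum>a<d. cnj (Cm a l) * Cm a l')
      = (\<Sum>a<d. \<Sum>i<d. \<Sum>i'<d. cnj (\<Phi> $ (i*d+l)) * \<Phi> $ (i'*d+l') * (cnj (F a i) * F a i'))"
  proof (rule sum.cong[OF refl])
    fix a
    have "cnj (Cm a l) * Cm a l' = (\<Sum>i<d. \<Sum>i'<d. cnj (F a i * \<Phi> $ (i*d+l)) * (F a i' * \<Phi> $ (i'*d+l')))"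
      unfolding Cm_def by (simp only: cnj_sum sum_product)
    then show "cnj (Cm a l) * Cm a l' = (\<Sum>i<d. \<Sum>i'<d. cnj (\<Phi> $ (i*d+l)) * \<Phi> $ (i'*d+l') * (cnj (F a i) * F a i'))"
      by (simp add: ac_simps)
  qed
  also have "\<dots> = (\<Sum>i<d. \<Sum>a<d. \<Sum>i'<d. cnj (\<Phi> $ (i*d+l)) * \<Phi> $ (i'*d+l') * (cnj (F a i) * F a i'))"
    by (rule sum.swap)
  also have "\<dots> = (\<Sum>i<d. \<Sum>i'<d. \<Sum>a<d. cnj (\<Phi> $ (i*d+l)) * \<Phi> $ (i'*d+l') * (cnj (F a i) * F a i'))"
    by (rule sum.cong[OF refl], rule sum.swap)
  also have "\<dots> = (\<Sum>i<d. \<Sum>i'<d. cnj (\<Phi> $ (i*d+l)) * \<Phi> $ (i'*d+l') * (\<Sum>a<d. cnj (F a i) * F a i'))"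
    by (simp add: sum_distrib_left)
  finally show ?thesis using dd by simp
qed

lemma product_complete_conj_max_ent:
  assumes pc: "product_complete L d fA fB" and me: "max_ent d \<Phi>" and me': "max_ent d \<Phi>'"
  defines "Ap \<equiv> \<lambda>k b l. of_nat d * (\<Sum>a<d. cnj (\<Phi>' $ (a*d+b)) * (\<Sum>i<d. fA k a i * \<Phi> $ (i*d+l)))"
  shows "product_complete L d Ap fB"
proof (unfold_locales)
  fix l l' j j' assume l: "l < d" and l': "l' < d" and j: "j < d" and j': "j' < d"
  have dd: "complex_of_nat d \<noteq> 0" using l by simp
  have CAB: "\<forall>i<d. \<forall>i'<d. \<forall>j<d. \<forall>j'<d. (\<Sum>k<L. (\<Sum>a<d. cnj (fA k a i) * fA k a i') * (\<Sum>b<d. cnj (fB k b j) * fB k b j'))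
       = (if i = i' \<and> j = j' then 1 else 0)"
    using product_complete.complete[OF pc] by blast
  have colP: "\<forall>l<d. \<forall>l'<d. (\<Sum>i<d. cnj (\<Phi> $ (i*d+l)) * \<Phi> $ (i*d+l')) = (if l = l' then 1 / of_nat d else 0)"
    using max_ent_col_inner[OF me] by blast
  define gA where "gA k i i' = (\<Sum>a<d. cnj (fA k a i) * fA k a i')" for k i i'
  have s2: "(\<Sum>b<d. cnj (Ap k b l) * Ap k b l')
      = of_nat d * (\<Sum>i<d. \<Sum>i'<d. cnj (\<Phi> $ (i*d+l)) * \<Phi> $ (i'*d+l') * gA k i i')" for k
    unfolding Ap_def gA_def by (rule sum_cnj_mult_conj_max_ent[OF me'])
  have "(\<Sum>k<L. (\<Sum>b<d. cnj (Ap k b l) * Ap k b l') * (\<Sum>b<d. cnj (fB k b j) * fB k b j'))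
     = (\<Sum>k<L. \<Sum>i<d. \<Sum>i'<d. of_nat d * (cnj (\<Phi>$(i*d+l)) * \<Phi>$(i'*d+l')) * (gA k i i' * (\<Sum>b<d. cnj (fB k b j) * fB k b j')))"
    unfolding s2 by (simp add: sum_distrib_left sum_distrib_right ac_simps)
  also have "\<dots> = (\<Sum>i<d. \<Sum>i'<d. of_nat d * (cnj (\<Phi>$(i*d+l)) * \<Phi>$(i'*d+l')) * (\<Sum>k<L. gA k i i' * (\<Sum>b<d. cnj (fB k b j) * fB k b j')))"
    by (subst sum.swap, rule sum.cong[OF refl], subst sum.swap) (simp add: sum_distrib_left)
  also have "\<dots> = (\<Sum>i<d. \<Sum>i'<d. of_nat d * (cnj (\<Phi>$(i*d+l)) * \<Phi>$(i'*d+l')) * (if i = i' \<and> j = j' then 1 else 0))"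
    using CAB j j' unfolding gA_def by (intro sum.cong refl) auto
  also have "\<dots> = (if j = j' then of_nat d * (\<Sum>i<d. cnj (\<Phi>$(i*d+l)) * \<Phi>$(i*d+l')) else 0)"
  proof -
    have "(\<Sum>i<d. \<Sum>i'<d. of_nat d * (cnj (\<Phi>$(i*d+l)) * \<Phi>$(i'*d+l')) * (if i = i' \<and> j = j' then 1 else 0))
       = (\<Sum>i<d. if j = j' then of_nat d * (cnj (\<Phi>$(i*d+l)) * \<Phi>$(i*d+l')) else 0)"
    proof (rule sum.cong[OF refl])
      fix i assume i: "i \<in> {..<d}"
      have "(\<Sum>i'<d. of_nat d * (cnj (\<Phi>$(i*d+l)) * \<Phi>$(i'*d+l')) * (if i = i' \<and> j = j' then 1 else 0))
          = (\<Sum>i'<d. if i = i' then (if j = j' then of_nat d * (cnj (\<Phi>$(i*d+l)) * \<Phi>$(i'*d+l')) else 0) else 0)"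
        by (intro sum.cong) auto
      also have "\<dots> = (if j = j' then of_nat d * (cnj (\<Phi>$(i*d+l)) * \<Phi>$(i*d+l')) else 0)"
        using i by (simp add: sum.delta)
      finally show "(\<Sum>i'<d. of_nat d * (cnj (\<Phi>$(i*d+l)) * \<Phi>$(i'*d+l')) * (if i = i' \<and> j = j' then 1 else 0))
          = (if j = j' then of_nat d * (cnj (\<Phi>$(i*d+l)) * \<Phi>$(i*d+l')) else 0)" .
    qed
    also have "\<dots> = (if j = j' then of_nat d * (\<Sum>i<d. cnj (\<Phi>$(i*d+l)) * \<Phi>$(i*d+l')) else 0)"
      by (simp add: sum_distrib_left)
    finally show ?thesis .
  qed
  also have "\<dots> = (if l = l' \<and> j = j' then 1 else 0)"
    using colP l l' dd by auto
  finally show "(\<Sum>k<L. (\<Sum>b<d. cnj (Ap k b l) * Ap k b l') * (\<Sum>b<d. cnj (fB k b j) * fB k b j')) = (if l = l' \<and> j = j' then 1 else 0)" .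
qed

lemma LOCC_channel_product_family:
  assumes "LOCC_channel d Ks"
  obtains MA MB where
    "\<And>k. k < length Ks \<Longrightarrow> MA k \<in> carrier_mat d d \<and> MB k \<in> carrier_mat d d \<and> Ks ! k = kron (MA k) (MB k)"
    "product_complete (length Ks) d (\<lambda>k a i. MA k $$ (a,i)) (\<lambda>k b j. MB k $$ (b,j))"
proof -
  have PF: "\<forall>K\<in>set Ks. product_op d d d d K" and CP: "kraus_complete (d*d) Ks"
    using LOCC_channel_product_complete[OF assms] by auto
  have "\<forall>K\<in>set Ks. \<exists>AB. fst AB \<in> carrier_mat d d \<and> snd AB \<in> carrier_mat d d \<and> K = kron (fst AB) (snd AB)"
    using PF unfolding product_op_def by fastforce
  then obtain f where f: "\<forall>K\<in>set Ks. fst (f K) \<in> carrier_mat d d \<and> snd (f K) \<in> carrier_mat d d \<and> K = kron (fst (f K)) (snd (f K))"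
    by metis
  define MA where "MA k = fst (f (Ks ! k))" for k
  define MB where "MB k = snd (f (Ks ! k))" for k
  have MAB: "MA k \<in> carrier_mat d d" "MB k \<in> carrier_mat d d" "Ks ! k = kron (MA k) (MB k)" if "k < length Ks" for k
    using f nth_mem[of k Ks] that unfolding MA_def MB_def by auto
  have "product_complete (length Ks) d (\<lambda>k a i. MA k $$ (a,i)) (\<lambda>k b j. MB k $$ (b,j))"
  proof (unfold_locales)
    fix i i' j j' assume ii: "i < d" "i' < d" "j < d" "j' < d"
    have "(\<Sum>k<length Ks. (\<Sum>a<d. cnj (MA k $$ (a,i)) * MA k $$ (a,i')) * (\<Sum>b<d. cnj (MB k $$ (b,j)) * MB k $$ (b,j')))
       = (\<Sum>k<length Ks. gram (Ks ! k) (i*d+j) (i'*d+j'))"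
    proof (rule sum.cong[OF refl])
      fix k assume "k \<in> {..<length Ks}"
      then have k: "k < length Ks" by simp
      have "gram (Ks ! k) (i*d+j) (i'*d+j') = gram (MA k) i i' * gram (MB k) j j'"
        unfolding MAB(3)[OF k] by (rule gram_kron[OF MAB(1,2)[OF k]]) (use ii in auto)
      also have "\<dots> = (\<Sum>a<d. cnj (MA k $$ (a,i)) * MA k $$ (a,i')) * (\<Sum>b<d. cnj (MB k $$ (b,j)) * MB k $$ (b,j'))"
        using MAB(1,2)[OF k] unfolding gram_def by simp
      finally show "(\<Sum>a<d. cnj (MA k $$ (a,i)) * MA k $$ (a,i')) * (\<Sum>b<d. cnj (MB k $$ (b,j)) * MB k $$ (b,j'))
          = gram (Ks ! k) (i*d+j) (i'*d+j')" ..
    qed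
    also have "\<dots> = sum_list (map (\<lambda>K. gram K (i*d+j) (i'*d+j')) Ks)"
      by (simp add: sum_list_sum_nth atLeast0LessThan)
    also have "\<dots> = (if i = i' \<and> j = j' then 1 else 0)"
      using CP ii unfolding kraus_complete_def by (simp add: pair_index_less pair_index_eq_iff)
    finally show "(\<Sum>k<length Ks. (\<Sum>a<d. cnj (MA k $$ (a,i)) * MA k $$ (a,i')) * (\<Sum>b<d. cnj (MB k $$ (b,j)) * MB k $$ (b,j')))
       = (if i = i' \<and> j = j' then 1 else 0)" .
  qed
  with MAB that show ?thesis by blast
qed

definition psi_weight :: "(nat \<Rightarrow> real) \<Rightarrow> nat \<Rightarrow> real" where "psi_weight x j = (if j = 0 then 1 else x j)"

definition x_sq_sum :: "nat \<Rightarrow> (nat \<Rightarrow> real) \<Rightarrow> real" where "x_sq_sum d x = (\<Sum>m\<in>{1..<d}. x m ^ 2)"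

definition psi_prime :: "nat \<Rightarrow> (nat \<Rightarrow> real) \<Rightarrow> complex vec" where
  "psi_prime d x = vec (d*d) (\<lambda>r. if r div d = r mod d then complex_of_real (psi_weight x (r mod d) / sqrt (1 + x_sq_sum d x)) else 0)"

lemma index_psi_prime: "i < d \<Longrightarrow> j < d \<Longrightarrow> psi_prime d x $ (i*d+j) = (if i = j then complex_of_real (psi_weight x j / sqrt (1 + x_sq_sum d x)) else 0)"
  by (simp add: psi_prime_def pair_index_less)

lemma x_sq_sum_nonneg: "0 \<le> x_sq_sum d x" unfolding x_sq_sum_def by (simp add: sum_nonneg)

lemma sum_psi_weight_sq: "0 < d \<Longrightarrow> (\<Sum>j<d. psi_weight x j ^ 2) = 1 + x_sq_sum d x"
  unfolding x_sq_sum_def by (subst sum_lessThan_split_first) (auto simp: psi_weight_def intro!: sum.cong)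

lemma is_unit_vec_psi_prime:
  assumes d0: "0 < d"
  shows "is_unit_vec (d*d) (psi_prime d x)"
proof -
  define N where "N = sqrt (1 + x_sq_sum d x)"
  have N2: "N^2 = 1 + x_sq_sum d x" unfolding N_def using x_sq_sum_nonneg[of d x] by simp
  have Npos: "N > 0" unfolding N_def using x_sq_sum_nonneg[of d x] by simp
  have "(\<Sum>r<d*d. cmod (psi_prime d x $ r) ^ 2) = (\<Sum>i<d. \<Sum>j<d. cmod (psi_prime d x $ (i*d+j)) ^ 2)"
    by (rule sum_lessThan_mult)
  also have "\<dots> = (\<Sum>i<d. \<Sum>j<d. if i = j then (psi_weight x i / N) ^ 2 else 0)"
  proof (intro sum.cong refl)
    fix i j assume ij: "i \<in> {..<d}" "j \<in> {..<d}"
    have e: "psi_prime d x $ (i*d+j) = (if i = j then complex_of_real (psi_weight x j / N) else 0)"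
      unfolding N_def by (rule index_psi_prime) (use ij in auto)
    show "cmod (psi_prime d x $ (i*d+j)) ^ 2 = (if i = j then (psi_weight x i / N) ^ 2 else 0)"
      unfolding e by (simp only: norm_of_real power2_abs split: if_split) simp
  qed
  also have "\<dots> = (\<Sum>i<d. (psi_weight x i / N) ^ 2)" by (simp only: sum.delta' finite_lessThan lessThan_iff if_True cong: if_cong) simp
  also have "\<dots> = (\<Sum>i<d. psi_weight x i ^ 2) / N^2" by (simp only: power_divide sum_divide_distrib)
  also have "\<dots> = 1" unfolding sum_psi_weight_sq[OF d0, of x] N2 using x_sq_sum_nonneg[of d x] by simp
  finally have s: "(\<Sum>r<d*d. cmod (psi_prime d x $ r) ^ 2) = 1" .
  moreover have "dim_vec (psi_prime d x) = d*d" by (simp add: psi_prime_def)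
  ultimately show ?thesis unfolding is_unit_vec_def by simp
qed

lemma x_sq_sum_less:
  assumes d2: "d \<ge> 2" and xr: "\<forall>m\<in>{1..<d}. 0 < x m \<and> x m < 1"
  shows "x_sq_sum d x < real d - 1"
proof -
  have "x_sq_sum d x < (\<Sum>m\<in>{1..<d}. 1)"
    unfolding x_sq_sum_def
  proof (rule sum_strict_mono)
    show "{1..<d} \<noteq> {}" using d2 by auto
    fix m assume "m \<in> {1..<d}"
    then have "0 < x m" "x m < 1" using xr by auto
    then have "x m * x m < 1 * 1" by (intro mult_strict_mono) auto
    then show "x m ^ 2 < 1" by (simp add: power2_eq_square)
  qed auto
  moreover have "(\<Sum>m\<in>{1..<d}. (1::real)) = real d - 1" using d2 by (simp add: of_nat_diff)
  ultimately show ?thesis by simp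
qed

lemma not_max_ent_psi_prime:
  assumes d2: "d \<ge> 2" and xr: "\<forall>m\<in>{1..<d}. 0 < x m \<and> x m < 1"
  shows "\<not> max_ent d (psi_prime d x)"
proof
  assume me: "max_ent d (psi_prime d x)"
  have d0: "0 < d" using d2 by auto
  define N where "N = sqrt (1 + x_sq_sum d x)"
  have N2: "N^2 = 1 + x_sq_sum d x" unfolding N_def using x_sq_sum_nonneg[of d x] by simp
  have "(\<Sum>j<d. psi_prime d x $ (0*d+j) * cnj (psi_prime d x $ (0*d+j))) = (\<Sum>j<d. if j = 0 then complex_of_real ((1/N)^2) else 0)"
  proof (intro sum.cong refl)
    fix j assume j: "j \<in> {..<d}"
    have e: "psi_prime d x $ (0*d+j) = (if 0 = j then complex_of_real (psi_weight x j / N) else 0)"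
      unfolding N_def by (rule index_psi_prime) (use j d0 in auto)
    show "psi_prime d x $ (0*d+j) * cnj (psi_prime d x $ (0*d+j)) = (if j = 0 then complex_of_real ((1/N)^2) else 0)"
      unfolding e by (simp add: psi_weight_def power2_eq_square of_real_mult[symmetric] del: of_real_divide of_real_mult)
  qed
  also have "\<dots> = complex_of_real ((1/N)^2)" using d0 by simp
  finally have "complex_of_real ((1/N)^2) = 1 / of_nat d" using max_ent_row_inner[OF me d0 d0] by simp
  then have "complex_of_real ((1/N)^2) = complex_of_real (1 / real d)" by simp
  then have "(1/N)^2 = 1 / real d" by (simp only: of_real_eq_iff)
  moreover have "(1/N)^2 = 1 / N^2" by (rule power_one_over)
  ultimately have "1 / (1 + x_sq_sum d x) = 1 / real d" unfolding N2 by simp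
  then have "1 + x_sq_sum d x = real d" by (metis inverse_eq_divide inverse_inverse_eq)
  then show False using x_sq_sum_less[OF d2 xr] by simp
qed

lemma diag_amplitude_phi_plus_psi_prime:
  fixes x :: "nat \<Rightarrow> real"
  assumes j: "j < d"
  defines "N \<equiv> sqrt (1 + x_sq_sum d x)"
  shows "(\<Sum>b<d. (1\<^sub>m d :: complex mat)$$(b,j) * (\<Sum>a<d. \<Sum>i<d. cnj (phi_plus d $(a*d+b)) * (1\<^sub>m d :: complex mat)$$(a,i) * psi_prime d x $(i*d+j)))
    = complex_of_real (1 / sqrt (real d) * (psi_weight x j / N))"
proof -
  have "(\<Sum>b<d. (1\<^sub>m d :: complex mat)$$(b,j) * (\<Sum>a<d. \<Sum>i<d. cnj (phi_plus d $(a*d+b)) * (1\<^sub>m d :: complex mat)$$(a,i) * psi_prime d x $(i*d+j))) = (\<Sum>b<d. if b = j then (\<Sum>a<d. \<Sum>i<d. cnj (phi_plus d $(a*d+b)) * (1\<^sub>m d :: complex mat)$$(a,i) * psi_prime d x $(i*d+j)) else 0)"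
    using j by (intro sum.cong refl) auto
  also have "\<dots> = (\<Sum>a<d. \<Sum>i<d. cnj (phi_plus d $(a*d+j)) * (1\<^sub>m d :: complex mat)$$(a,i) * psi_prime d x $(i*d+j))"
    using j by simp
  also have "\<dots> = (\<Sum>a<d. if a = j then complex_of_real (1 / sqrt (real d) * (psi_weight x j / N)) else 0)"
  proof (rule sum.cong[OF refl])
    fix a assume a: "a \<in> {..<d}"
    have "(\<Sum>i<d. cnj (phi_plus d $(a*d+j)) * (1\<^sub>m d :: complex mat)$$(a,i) * psi_prime d x $(i*d+j))
        = (\<Sum>i<d. if i = a then cnj (phi_plus d $(a*d+j)) * psi_prime d x $(a*d+j) else 0)"
      using a by (intro sum.cong refl) auto
    also have "\<dots> = cnj (phi_plus d $(a*d+j)) * psi_prime d x $(a*d+j)" using a by simp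
    also have "\<dots> = (if a = j then complex_of_real (1 / sqrt (real d) * (psi_weight x j / N)) else 0)"
      using a j by (simp add: index_phi_plus index_psi_prime N_def)
    finally show "(\<Sum>i<d. cnj (phi_plus d $(a*d+j)) * (1\<^sub>m d :: complex mat)$$(a,i) * psi_prime d x $(i*d+j))
        = (if a = j then complex_of_real (1 / sqrt (real d) * (psi_weight x j / N)) else 0)" .
  qed
  also have "\<dots> = complex_of_real (1 / sqrt (real d) * (psi_weight x j / N))" using j by simp
  finally show ?thesis .
qed

lemma cmod_damped_amplitude_phi_plus_psi_prime:
  fixes x :: "nat \<Rightarrow> real"
  assumes d0: "0 < d"
  defines "H \<equiv> \<lambda>j l. (\<Sum>b<d. (1\<^sub>m d :: complex mat)$$(b,j) * (\<Sum>a<d. \<Sum>i<d. cnj (phi_plus d $(a*d+b)) * (1\<^sub>m d :: complex mat)$$(a,i) * psi_prime d x $(i*d+l)))"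
  shows "cmod (H 0 0 + (\<Sum>m\<in>{1..<d}. complex_of_real (x m) * H m m)) ^ 2 = (1 + x_sq_sum d x) / real d"
proof -
  define N where "N = sqrt (1 + x_sq_sum d x)"
  have N2: "N^2 = 1 + x_sq_sum d x" unfolding N_def using x_sq_sum_nonneg[of d x] by simp
  have Npos: "N > 0" unfolding N_def using x_sq_sum_nonneg[of d x] by simp
  have Hjj: "H j j = complex_of_real (1 / sqrt (real d) * (psi_weight x j / N))" if "j < d" for j
    unfolding H_def N_def by (rule diag_amplitude_phi_plus_psi_prime[OF that])
  have "H 0 0 + (\<Sum>m\<in>{1..<d}. complex_of_real (x m) * H m m) = complex_of_real (1 / sqrt (real d) * (1 / N) * (1 + x_sq_sum d x))"
  proof -
    define c where "c = 1 / sqrt (real d) * (1 / N)"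
    have "(\<Sum>m\<in>{1..<d}. complex_of_real (x m) * H m m) = (\<Sum>m\<in>{1..<d}. complex_of_real (c * x m ^ 2))"
      unfolding c_def by (intro sum.cong refl) (auto simp: Hjj psi_weight_def power2_eq_square)
    also have "\<dots> = complex_of_real (\<Sum>m\<in>{1..<d}. c * x m ^ 2)" by (simp only: of_real_sum)
    also have "(\<Sum>m\<in>{1..<d}. c * x m ^ 2) = c * x_sq_sum d x" unfolding x_sq_sum_def by (simp only: sum_distrib_left)
    finally have h1: "(\<Sum>m\<in>{1..<d}. complex_of_real (x m) * H m m) = complex_of_real (c * x_sq_sum d x)" .
    have h0: "H 0 0 = complex_of_real c" using Hjj[OF d0] unfolding c_def by (simp add: psi_weight_def)
    have "H 0 0 + (\<Sum>m\<in>{1..<d}. complex_of_real (x m) * H m m) = complex_of_real (c + c * x_sq_sum d x)"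
      unfolding h0 h1 by (simp only: of_real_add)
    also have "c + c * x_sq_sum d x = c * (1 + x_sq_sum d x)" by (simp add: algebra_simps)
    finally show ?thesis unfolding c_def .
  qed
  then show ?thesis
  proof -
    assume e: "H 0 0 + (\<Sum>m\<in>{1..<d}. complex_of_real (x m) * H m m) = complex_of_real (1 / sqrt (real d) * (1 / N) * (1 + x_sq_sum d x))"
    have "cmod (complex_of_real (1 / sqrt (real d) * (1 / N) * (1 + x_sq_sum d x))) ^ 2 = (1 / sqrt (real d) * (1 / N) * (1 + x_sq_sum d x)) ^ 2"
      by (simp only: norm_of_real power2_abs)
    also have "\<dots> = (1 / real d) * (1 / N^2) * (1 + x_sq_sum d x)^2"
      using d0 by (simp add: power_mult_distrib power_divide)
    also have "\<dots> = (1 + x_sq_sum d x) / real d" using N2 Npos x_sq_sum_nonneg[of d x] by (simp add: power2_eq_square)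
    finally show ?thesis unfolding e .
  qed
qed

lemma expect_phi_plus_rho_out_psi_prime_ge:
  assumes d2: "d \<ge> 2" and xr: "\<forall>m\<in>{1..<d}. 0 < x m \<and> x m < 1"
  shows "expect (phi_plus d) (rho_out d (Omega_kraus d x) (psi_prime d x)) \<ge> (1 + x_sq_sum d x) / real d"
proof -
  have d0: "0 < d" using d2 by auto
  have dP: "dim_vec (phi_plus d) = d*d" by (simp add: phi_plus_def)
  have dp: "dim_vec (psi_prime d x) = d*d" by (simp add: psi_prime_def)
  have rc: "rho_out d (Omega_kraus d x) (psi_prime d x) \<in> carrier_mat (d*d) (d*d)"
    by (rule rho_out_carrier[OF Omega_kraus_carrier dp])
  have "kron (1\<^sub>m d) (1\<^sub>m d) \<in> carrier_mat (d*d) (d*d)" unfolding kron_one_one by (rule one_carrier_mat)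
  then have cK: "\<forall>K\<in>set [kron (1\<^sub>m d) (1\<^sub>m d)]. K \<in> carrier_mat (d*d) (d*d)" by simp
  define H where "H = (\<lambda>j l. (\<Sum>b<d. (1\<^sub>m d :: complex mat)$$(b,j) * (\<Sum>a<d. \<Sum>i<d. cnj (phi_plus d $(a*d+b)) * (1\<^sub>m d :: complex mat)$$(a,i) * psi_prime d x $(i*d+l))))"
  have Hv: "cmod (H 0 0 + (\<Sum>m\<in>{1..<d}. complex_of_real (x m) * H m m)) ^ 2 = (1 + x_sq_sum d x) / real d"
    unfolding H_def by (rule cmod_damped_amplitude_phi_plus_psi_prime[OF d0])
  have "expect (phi_plus d) (rho_out d (Omega_kraus d x) (psi_prime d x)) = expect (phi_plus d) (apply_kraus (d*d) [kron (1\<^sub>m d) (1\<^sub>m d)] (rho_out d (Omega_kraus d x) (psi_prime d x)))"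
    using apply_kraus_one[OF rc] by (simp add: kron_one_one)
  also have "\<dots> = (\<Sum>m<d. cmod (vinner (phi_plus d) (kron (1\<^sub>m d) (1\<^sub>m d) *\<^sub>v (kron (1\<^sub>m d) (kraus_A d x m) *\<^sub>v psi_prime d x))) ^ 2)"
    unfolding expect_apply_kraus_rho_out[OF cK Omega_kraus_carrier dp dP] by (simp add: sum_list_Omega_kraus)
  also have "\<dots> = cmod (H 0 0 + (\<Sum>m\<in>{1..<d}. complex_of_real (x m) * H m m)) ^ 2 + (\<Sum>m\<in>{1..<d}. (1 - x m ^ 2) * cmod (H 0 m) ^ 2)"
    unfolding H_def by (rule sum_cmod_vinner_Omega_sq[OF one_carrier_mat one_carrier_mat d0 dP dp xr])
  also have "\<dots> \<ge> (1 + x_sq_sum d x) / real d"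
  proof -
    have "(\<Sum>m\<in>{1..<d}. (1 - x m ^ 2) * cmod (H 0 m) ^ 2) \<ge> 0"
    proof (intro sum_nonneg mult_nonneg_nonneg)
      fix m assume "m \<in> {1..<d}"
      then have "0 < x m" "x m < 1" using xr by auto
      then have "x m ^ 2 \<le> 1" by (intro power_le_one) auto
      then show "0 \<le> 1 - x m ^ 2" by simp
    qed auto
    then show ?thesis using Hv by simp
  qed
  finally show ?thesis .
qed

lemma expect_product_kraus_rho_out_Omega:
  assumes MAB: "\<And>k. k < length Ks \<Longrightarrow> MA k \<in> carrier_mat d d \<and> MB k \<in> carrier_mat d d \<and> Ks ! k = kron (MA k) (MB k)"
    and cK: "\<forall>K\<in>set Ks. K \<in> carrier_mat (d*d) (d*d)"
    and d0: "0 < d" and dP: "dim_vec \<Phi> = d*d" and dP': "dim_vec \<Phi>' = d*d"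
    and xr: "\<forall>m\<in>{1..<d}. 0 < x m \<and> x m < 1"
  defines "H \<equiv> \<lambda>k j l. (\<Sum>b<d. MB k $$ (b,j) * (\<Sum>a<d. \<Sum>i<d. cnj (\<Phi>' $ (a*d+b)) * MA k $$ (a,i) * \<Phi> $ (i*d+l)))"
  shows "expect \<Phi>' (apply_kraus (d*d) Ks (rho_out d (Omega_kraus d x) \<Phi>))
    = (\<Sum>k<length Ks. cmod (H k 0 0 + (\<Sum>m\<in>{1..<d}. complex_of_real (x m) * H k m m)) ^ 2
        + (\<Sum>m\<in>{1..<d}. (1 - x m ^ 2) * cmod (H k 0 m) ^ 2))"
proof -
  have "expect \<Phi>' (apply_kraus (d*d) Ks (rho_out d (Omega_kraus d x) \<Phi>))
     = sum_list (map (\<lambda>K. sum_list (map (\<lambda>A. cmod (vinner \<Phi>' (K *\<^sub>v (kron (1\<^sub>m d) A *\<^sub>v \<Phi>))) ^ 2) (Omega_kraus d x))) Ks)"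
    by (rule expect_apply_kraus_rho_out[OF cK Omega_kraus_carrier dP dP'])
  also have "\<dots> = (\<Sum>k<length Ks. \<Sum>m<d. cmod (vinner \<Phi>' (Ks ! k *\<^sub>v (kron (1\<^sub>m d) (kraus_A d x m) *\<^sub>v \<Phi>))) ^ 2)"
    unfolding sum_list_Omega_kraus by (simp add: sum_list_sum_nth atLeast0LessThan)
  also have "\<dots> = (\<Sum>k<length Ks. cmod (H k 0 0 + (\<Sum>m\<in>{1..<d}. complex_of_real (x m) * H k m m)) ^ 2
        + (\<Sum>m\<in>{1..<d}. (1 - x m ^ 2) * cmod (H k 0 m) ^ 2))"
  proof (rule sum.cong[OF refl])
    fix k assume "k \<in> {..<length Ks}"
    then have k: "MA k \<in> carrier_mat d d" "MB k \<in> carrier_mat d d" "Ks ! k = kron (MA k) (MB k)"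
      using MAB by auto
    show "(\<Sum>m<d. cmod (vinner \<Phi>' (Ks ! k *\<^sub>v (kron (1\<^sub>m d) (kraus_A d x m) *\<^sub>v \<Phi>))) ^ 2)
        = cmod (H k 0 0 + (\<Sum>m\<in>{1..<d}. complex_of_real (x m) * H k m m)) ^ 2
          + (\<Sum>m\<in>{1..<d}. (1 - x m ^ 2) * cmod (H k 0 m) ^ 2)"
      unfolding k(3) H_def by (rule sum_cmod_vinner_Omega_sq[OF k(1,2) d0 dP' dP xr])
  qed
  finally show ?thesis .
qed

lemma expect_LOCC_rho_out_max_ent_le:
  assumes d2: "2 \<le> d" and xr: "\<forall>m\<in>{1..<d}. 0 < x m \<and> x m < 1"
    and LC: "LOCC_channel d Ks" and me: "max_ent d \<Phi>" and me': "max_ent d \<Phi>'"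
  shows "expect \<Phi>' (apply_kraus (d*d) Ks (rho_out d (Omega_kraus d x) \<Phi>))
     \<le> (1 + x_sq_sum d x) / real d - (\<Sum>m\<in>{1..<d}. x m ^ 2 * (1 - x m) ^ 2 / 4) / (real d)^2"
proof -
  have d0: "0 < d" using d2 by auto
  obtain MA MB where MAB: "\<And>k. k < length Ks \<Longrightarrow> MA k \<in> carrier_mat d d \<and> MB k \<in> carrier_mat d d \<and> Ks ! k = kron (MA k) (MB k)"
    and pc: "product_complete (length Ks) d (\<lambda>k a i. MA k $$ (a,i)) (\<lambda>k b j. MB k $$ (b,j))"
    using LOCC_channel_product_family[OF LC] by blast
  have dP: "dim_vec \<Phi> = d*d" and dP': "dim_vec \<Phi>' = d*d"
    using me me' unfolding max_ent_def is_unit_vec_def by auto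
  define L where "L = length Ks"
  define fA where "fA = (\<lambda>k a i. MA k $$ (a,i))"
  define fB where "fB = (\<lambda>k b j. MB k $$ (b,j))"
  \<comment> \<open>Alice's operators, moved across the two maximally entangled states onto Bob's side\<close>
  define Ap where "Ap = (\<lambda>k b l. of_nat d * (\<Sum>a<d. cnj (\<Phi>' $ (a*d+b)) * (\<Sum>i<d. fA k a i * \<Phi> $ (i*d+l))))"
  interpret product_complete L d Ap fB
    unfolding Ap_def L_def fA_def fB_def by (rule product_complete_conj_max_ent[OF pc me me'])
  define H where "H = (\<lambda>k j l. (\<Sum>b<d. MB k $$ (b,j) * (\<Sum>a<d. \<Sum>i<d. cnj (\<Phi>' $ (a*d+b)) * MA k $$ (a,i) * \<Phi> $ (i*d+l))))"
  define Tm where "Tm k = cmod (H k 0 0 + (\<Sum>m\<in>{1..<d}. complex_of_real (x m) * H k m m)) ^ 2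
    + (\<Sum>m\<in>{1..<d}. (1 - x m ^ 2) * cmod (H k 0 m) ^ 2)" for k
  have ex: "expect \<Phi>' (apply_kraus (d*d) Ks (rho_out d (Omega_kraus d x) \<Phi>)) = (\<Sum>k<L. Tm k)"
    unfolding Tm_def H_def L_def
    by (rule expect_product_kraus_rho_out_Omega[OF MAB LOCC_channel_carrier_complete(1)[OF LC] d0 dP dP' xr])
  have GH: "G k j l = of_nat d * H k j l" for k j l
    unfolding G_def unfolding Ap_def H_def fA_def fB_def by (simp add: sum_distrib_left ac_simps)
  have "cmod (G k 0 0 + (\<Sum>m\<in>{1..<d}. complex_of_real (x m) * G k m m)) ^ 2
      + (\<Sum>m\<in>{1..<d}. (1 - x m ^ 2) * cmod (G k 0 m) ^ 2) = (real d)^2 * Tm k" for k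
  proof -
    have "G k 0 0 + (\<Sum>m\<in>{1..<d}. complex_of_real (x m) * G k m m)
        = of_nat d * (H k 0 0 + (\<Sum>m\<in>{1..<d}. complex_of_real (x m) * H k m m))"
      unfolding GH by (simp add: sum_distrib_left distrib_left ac_simps)
    then have "cmod (G k 0 0 + (\<Sum>m\<in>{1..<d}. complex_of_real (x m) * G k m m)) ^ 2
        = (real d)^2 * cmod (H k 0 0 + (\<Sum>m\<in>{1..<d}. complex_of_real (x m) * H k m m)) ^ 2"
      by (simp add: norm_mult power_mult_distrib)
    moreover have "(\<Sum>m\<in>{1..<d}. (1 - x m ^ 2) * cmod (G k 0 m) ^ 2)
        = (real d)^2 * (\<Sum>m\<in>{1..<d}. (1 - x m ^ 2) * cmod (H k 0 m) ^ 2)"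
      unfolding GH by (simp add: norm_mult power_mult_distrib sum_distrib_left ac_simps)
    ultimately show ?thesis unfolding Tm_def by (simp add: distrib_left)
  qed
  then have "(real d)^2 * (\<Sum>k<L. Tm k)
      \<le> real d * (1 + x_sq_sum d x) - (\<Sum>m\<in>{1..<d}. x m ^ 2 * (1 - x m) ^ 2 / 4)"
    using damped_sum_le[OF d2 xr] unfolding x_sq_sum_def by (simp add: sum_distrib_left)
  then have "(\<Sum>k<L. Tm k)
      \<le> (real d * (1 + x_sq_sum d x) - (\<Sum>m\<in>{1..<d}. x m ^ 2 * (1 - x m) ^ 2 / 4)) / (real d)^2"
    using d0 by (simp add: pos_le_divide_eq mult.commute)
  also have "\<dots> = (1 + x_sq_sum d x) / real d - (\<Sum>m\<in>{1..<d}. x m ^ 2 * (1 - x m) ^ 2 / 4) / (real d)^2"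
    using d0 by (simp add: field_simps power2_eq_square)
  finally show ?thesis unfolding ex .
qed

lemma damping_gap_pos:
  fixes x :: "nat \<Rightarrow> real"
  assumes "2 \<le> d" and "\<forall>m\<in>{1..<d}. 0 < x m \<and> x m < 1"
  shows "0 < (\<Sum>m\<in>{1..<d}. x m ^ 2 * (1 - x m) ^ 2 / 4)"
proof (rule sum_pos)
  fix m assume "m \<in> {1..<d}"
  then have "0 < x m" "0 < 1 - x m" using assms(2) by auto
  then show "0 < x m ^ 2 * (1 - x m) ^ 2 / 4" by simp
qed (use assms(1) in auto)

theorem theorem1:
  fixes d :: nat and x :: "nat \<Rightarrow> real"
  assumes "d \<ge> 3"
    and "\<forall>i\<in>{1..d-1}. 0 < x i \<and> x i < 1"
    and "\<exists>i\<in>{1..d-1}. \<exists>j\<in>{1..d-1}. x i \<noteq> x j"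
  shows "\<exists>\<psi>'. is_unit_vec (d*d) \<psi>' \<and> \<not> max_ent d \<psi>' \<and>
           (\<forall>\<Phi>. max_ent d \<Phi> \<longrightarrow>
              channel_singlet_fraction d (Omega_kraus d x)
                \<ge> singlet_fraction d (rho_out d (Omega_kraus d x) \<psi>') \<and>
              singlet_fraction d (rho_out d (Omega_kraus d x) \<psi>')
                > max_singlet_fraction d (rho_out d (Omega_kraus d x) \<Phi>))"
proof -
  have d: "0 < d" "2 \<le> d" using assms(1) by auto
  have xr: "\<forall>m\<in>{1..<d}. 0 < x m \<and> x m < 1" using assms(2) by auto
  then have "\<forall>m\<in>{1..<d}. x m ^ 2 \<le> 1" by (simp add: power_le_one less_imp_le)
  then have \<Omega>: "\<forall>A\<in>set (Omega_kraus d x). A \<in> carrier_mat d d" "kraus_complete d (Omega_kraus d x)"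
    using Omega_kraus_carrier kraus_complete_Omega by blast+
  let ?\<rho> = "rho_out d (Omega_kraus d x)"
  have \<psi>': "is_unit_vec (d*d) (psi_prime d x)" by (rule is_unit_vec_psi_prime[OF d(1)])
  show ?thesis
  proof (intro exI[of _ "psi_prime d x"] conjI allI impI \<psi>' not_max_ent_psi_prime[OF d(2) xr])
    show "singlet_fraction d (?\<rho> (psi_prime d x)) \<le> channel_singlet_fraction d (Omega_kraus d x)"
      using singlet_fraction_le_max_singlet_fraction[OF d(1) \<Omega> \<psi>'] max_singlet_fraction_le_channel[OF d(1) \<Omega> \<psi>']
      by linarith
    fix \<Phi> assume "max_ent d \<Phi>"
    then have "max_singlet_fraction d (?\<rho> \<Phi>)
        \<le> (1 + x_sq_sum d x) / real d - (\<Sum>m\<in>{1..<d}. x m ^ 2 * (1 - x m) ^ 2 / 4) / (real d)^2"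
      by (intro max_singlet_fraction_le singlet_fraction_le d(1) expect_LOCC_rho_out_max_ent_le d(2) xr)
    also have "\<dots> < (1 + x_sq_sum d x) / real d" using damping_gap_pos[OF d(2) xr] d(1) by simp
    also have "\<dots> \<le> expect (phi_plus d) (?\<rho> (psi_prime d x))"
      by (rule expect_phi_plus_rho_out_psi_prime_ge[OF d(2) xr])
    also have "\<dots> \<le> singlet_fraction d (?\<rho> (psi_prime d x))"
      by (rule expect_le_singlet_fraction_rho_out[OF d(1) \<Omega> \<psi>' max_ent_phi_plus[OF d(1)]])
    finally show "max_singlet_fraction d (?\<rho> \<Phi>) < singlet_fraction d (?\<rho> (psi_prime d x))" .
  qed
qed

end
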